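(* Let $M$ be the monoid presented by the rewriting system over $A=\{a,b,c\}$ with rules $cbab\to cbcb$, $cbbb\to cbcb$, $cbca\to cacb$, $cbaa\to cbca$, $cbba\to cbca$, $caab\to cacb$, $cabb\to cacb$, $caaa\to caca$, $caba\to caca$. Then this rewriting system is complete (noetherian and confluent), so $M$ is FCRS (and hence FDT); moreover $M$ is automatic but not biautomatic.
   Context: A monoid is FCRS if it admits a presentation by a finite complete string rewriting system; FDT means finite derivation type (in Squier's sense). Automatic/biautomatic: for a finite generating alphabet $A$ of $M$ and regular $L\subseteq A^*$ mapping onto $M$, set $L_a=\{(u,v)\in L^2: ua=_Mv\}$, ${}_aL=\{(u,v)\in L^2: au=_Mv\}$ ($a\in A\cup\{\varepsilon\}$); $\delta_R$ ($\delta_L$) converts a pair of words into a word over pairs of letters by padding the shorter word at the end (beginning) with a new symbol $\$$. $M$ is automatic if for some such $(A,L)$ all $L_a\delta_R$ are regular; biautomatic if for some such $(A,L)$ all $L_a\delta_R,{}_aL\delta_R,L_a\delta_L,{}_aL\delta_L$ are regular. *)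

theory Defs
  imports Main
begin

definition rstep :: "('x list \<times> 'x list) set \<Rightarrow> ('x list \<times> 'x list) set" where
  "rstep R = {(x @ l @ y, x @ r @ y) | x l r y. (l, r) \<in> R}"

definition noetherian :: "('x list \<times> 'x list) set \<Rightarrow> bool" where
  "noetherian R \<longleftrightarrow> wf ((rstep R)\<inverse>)"

definition confluent :: "('x list \<times> 'x list) set \<Rightarrow> bool" where
  "confluent R \<longleftrightarrow> (\<forall>u v w. (u, v) \<in> (rstep R)\<^sup>* \<and> (u, w) \<in> (rstep R)\<^sup>* \<longrightarrow>
      (\<exists>z. (v, z) \<in> (rstep R)\<^sup>* \<and> (w, z) \<in> (rstep R)\<^sup>*))"

definition complete_srs :: "('x list \<times> 'x list) set \<Rightarrow> bool" where
  "complete_srs R \<longleftrightarrow> noetherian R \<and> confluent R"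

text \<open>The Thue congruence: equality in the presented monoid.\<close>
definition congr :: "('x list \<times> 'x list) set \<Rightarrow> ('x list \<times> 'x list) set" where
  "congr R = (rstep R \<union> (rstep R)\<inverse>)\<^sup>*"

definition ev :: "('b \<Rightarrow> 'x list) \<Rightarrow> 'b list \<Rightarrow> 'x list" where
  "ev f u = concat (map f u)"

text \<open>The monoid \<open>\<langle>X | R\<rangle>\<close> is isomorphic to the monoid \<open>\<langle>A | S\<rangle>\<close>: witnessed by
  a homomorphism \<open>X\<^sup>* \<rightarrow> A\<^sup>*\<close> (given on letters by f) that induces an injective
  and surjective map between the presented monoids.\<close>
definition presents_same :: "'y set \<Rightarrow> ('y list \<times> 'y list) set \<Rightarrow> 'x set \<Rightarrow> ('x list \<times> 'x list) set \<Rightarrow> bool" where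
  "presents_same X R A S \<longleftrightarrow> (\<exists>f g.
      (\<forall>y\<in>X. f y \<in> lists A) \<and> (\<forall>z\<in>A. g z \<in> lists X) \<and>
      (\<forall>u\<in>lists X. \<forall>v\<in>lists X. (u, v) \<in> congr R \<longleftrightarrow> (ev f u, ev f v) \<in> congr S) \<and>
      (\<forall>z\<in>A. (ev f (g z), [z]) \<in> congr S))"

text \<open>A finite presentation (over a finite alphabet of naturals, which is no loss of generality).\<close>
definition fin_pres :: "nat set \<Rightarrow> (nat list \<times> nat list) set \<Rightarrow> bool" where
  "fin_pres X R \<longleftrightarrow> finite X \<and> finite R \<and> R \<subseteq> lists X \<times> lists X"

definition FCRS :: "'x set \<Rightarrow> ('x list \<times> 'x list) set \<Rightarrow> bool" where
  "FCRS A S \<longleftrightarrow> (\<exists>X R. fin_pres X R \<and> complete_srs R \<and> presents_same X R A S)"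

text \<open>An edge of the derivation graph: (x, rule, direction, y); positive direction goes
  from x l y to x r y, negative direction the reverse.\<close>
type_synonym 'x edge = "'x list \<times> ('x list \<times> 'x list) \<times> bool \<times> 'x list"
type_synonym 'x dpath = "'x list \<times> 'x edge list"

fun esrc :: "'x edge \<Rightarrow> 'x list" where
  "esrc (x, (l, r), d, y) = (if d then x @ l @ y else x @ r @ y)"

fun etgt :: "'x edge \<Rightarrow> 'x list" where
  "etgt (x, (l, r), d, y) = (if d then x @ r @ y else x @ l @ y)"

fun einv :: "'x edge \<Rightarrow> 'x edge" where
  "einv (x, \<rho>, d, y) = (x, \<rho>, \<not> d, y)"

fun ectx :: "'x list \<Rightarrow> 'x edge \<Rightarrow> 'x list \<Rightarrow> 'x edge" where
  "ectx u (x, \<rho>, d, y) v = (u @ x, \<rho>, d, y @ v)"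

fun chain :: "'x list \<Rightarrow> 'x edge list \<Rightarrow> bool" where
  "chain w [] = True"
| "chain w (e # es) = (esrc e = w \<and> chain (etgt e) es)"

fun ptgt :: "'x list \<Rightarrow> 'x edge list \<Rightarrow> 'x list" where
  "ptgt w [] = w"
| "ptgt w (e # es) = ptgt (etgt e) es"

definition dedges :: "'x set \<Rightarrow> ('x list \<times> 'x list) set \<Rightarrow> 'x edge set" where
  "dedges X R = {(x, \<rho>, d, y). \<rho> \<in> R \<and> x \<in> lists X \<and> y \<in> lists X}"

definition dpaths :: "'x set \<Rightarrow> ('x list \<times> 'x list) set \<Rightarrow> 'x dpath set" where
  "dpaths X R = {(w, es). w \<in> lists X \<and> set es \<subseteq> dedges X R \<and> chain w es}"

definition pstart :: "'x dpath \<Rightarrow> 'x list" where "pstart p = fst p"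
definition pend :: "'x dpath \<Rightarrow> 'x list" where "pend p = ptgt (fst p) (snd p)"

definition parallel :: "'x dpath \<Rightarrow> 'x dpath \<Rightarrow> bool" where
  "parallel p q \<longleftrightarrow> pstart p = pstart q \<and> pend p = pend q"

definition pcomp :: "'x dpath \<Rightarrow> 'x dpath \<Rightarrow> 'x dpath" where
  "pcomp p q = (fst p, snd p @ snd q)"

definition pinv :: "'x dpath \<Rightarrow> 'x dpath" where
  "pinv p = (pend p, rev (map einv (snd p)))"

definition pctx :: "'x list \<Rightarrow> 'x dpath \<Rightarrow> 'x list \<Rightarrow> 'x dpath" where
  "pctx u p v = (u @ fst p @ v, map (\<lambda>e. ectx u e v) (snd p))"

inductive_set htpy :: "'x set \<Rightarrow> ('x list \<times> 'x list) set \<Rightarrow> ('x dpath \<times> 'x dpath) set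
    \<Rightarrow> ('x dpath \<times> 'x dpath) set"
  for X R Bs where
  base: "(p, q) \<in> Bs \<Longrightarrow> (p, q) \<in> htpy X R Bs"
| refl: "p \<in> dpaths X R \<Longrightarrow> (p, p) \<in> htpy X R Bs"
| sym: "(p, q) \<in> htpy X R Bs \<Longrightarrow> (q, p) \<in> htpy X R Bs"
| trans: "(p, q) \<in> htpy X R Bs \<Longrightarrow> (q, s) \<in> htpy X R Bs \<Longrightarrow> (p, s) \<in> htpy X R Bs"
| ctx: "(p, q) \<in> htpy X R Bs \<Longrightarrow> u \<in> lists X \<Longrightarrow> v \<in> lists X \<Longrightarrow>
         (pctx u p v, pctx u q v) \<in> htpy X R Bs"
| comp: "(p, q) \<in> htpy X R Bs \<Longrightarrow> r \<in> dpaths X R \<Longrightarrow> s \<in> dpaths X R \<Longrightarrow>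
         pend r = pstart p \<Longrightarrow> pstart s = pend p \<Longrightarrow>
         (pcomp (pcomp r p) s, pcomp (pcomp r q) s) \<in> htpy X R Bs"
| inv: "p \<in> dpaths X R \<Longrightarrow> (pcomp p (pinv p), (pstart p, [])) \<in> htpy X R Bs"
| indep: "e1 \<in> dedges X R \<Longrightarrow> e2 \<in> dedges X R \<Longrightarrow>
         ((esrc e1 @ esrc e2, [ectx [] e1 (esrc e2), ectx (etgt e1) e2 []]),
          (esrc e1 @ esrc e2, [ectx (esrc e1) e2 [], ectx [] e1 (etgt e2)])) \<in> htpy X R Bs"

definition FDT_pres :: "'x set \<Rightarrow> ('x list \<times> 'x list) set \<Rightarrow> bool" where
  "FDT_pres X R \<longleftrightarrow> (\<exists>Bs. finite Bs \<and>
      (\<forall>(p, q)\<in>Bs. p \<in> dpaths X R \<and> q \<in> dpaths X R \<and> parallel p q) \<and>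
      (\<forall>p\<in>dpaths X R. \<forall>q\<in>dpaths X R. parallel p q \<longrightarrow> (p, q) \<in> htpy X R Bs))"

definition FDT :: "'x set \<Rightarrow> ('x list \<times> 'x list) set \<Rightarrow> bool" where
  "FDT A S \<longleftrightarrow> (\<exists>X R. fin_pres X R \<and> FDT_pres X R \<and> presents_same X R A S)"

definition regular :: "'s list set \<Rightarrow> bool" where
  "regular L \<longleftrightarrow> (\<exists>(Q :: nat set) q0 \<delta> F. finite Q \<and> q0 \<in> Q \<and>
      (\<forall>q\<in>Q. \<forall>s. \<delta> q s \<in> Q) \<and> F \<subseteq> Q \<and> L = {w. foldl \<delta> q0 w \<in> F})"

text \<open>Padding; None plays the role of the padding symbol \$.\<close>
definition deltaR :: "'b list \<Rightarrow> 'b list \<Rightarrow> ('b option \<times> 'b option) list" where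
  "deltaR u v = (let n = max (length u) (length v) in
     zip (map Some u @ replicate (n - length u) None) (map Some v @ replicate (n - length v) None))"

definition deltaL :: "'b list \<Rightarrow> 'b list \<Rightarrow> ('b option \<times> 'b option) list" where
  "deltaL u v = (let n = max (length u) (length v) in
     zip (replicate (n - length u) None @ map Some u) (replicate (n - length v) None @ map Some v))"

text \<open>For a generating alphabet B with letters interpreted by \<phi> (word over A) and g \<in> B \<union> {\<epsilon>}
  (encoded as option): the relations \<open>L_g\<close> and \<open>\<^sub>gL\<close>.\<close>
definition Lright :: "('x list \<times> 'x list) set \<Rightarrow> (nat \<Rightarrow> 'x list) \<Rightarrow> nat list set \<Rightarrow> nat option
    \<Rightarrow> (nat list \<times> nat list) set" where
  "Lright S \<phi> L g = {(u, v). u \<in> L \<and> v \<in> L \<and>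
      (ev \<phi> u @ (case g of None \<Rightarrow> [] | Some h \<Rightarrow> \<phi> h), ev \<phi> v) \<in> congr S}"

definition Lleft :: "('x list \<times> 'x list) set \<Rightarrow> (nat \<Rightarrow> 'x list) \<Rightarrow> nat list set \<Rightarrow> nat option
    \<Rightarrow> (nat list \<times> nat list) set" where
  "Lleft S \<phi> L g = {(u, v). u \<in> L \<and> v \<in> L \<and>
      ((case g of None \<Rightarrow> [] | Some h \<Rightarrow> \<phi> h) @ ev \<phi> u, ev \<phi> v) \<in> congr S}"

text \<open>(B, \<phi>) is a finite generating alphabet (B finite, w.l.o.g. a set of naturals, each letter
  naming the element of M represented by \<phi>), L a regular language over B mapping onto M.\<close>
definition lang_ok :: "'x set \<Rightarrow> ('x list \<times> 'x list) set \<Rightarrow> nat set \<Rightarrow> (nat \<Rightarrow> 'x list)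
    \<Rightarrow> nat list set \<Rightarrow> bool" where
  "lang_ok A S B \<phi> L \<longleftrightarrow> finite B \<and> (\<forall>h\<in>B. \<phi> h \<in> lists A) \<and> L \<subseteq> lists B \<and> regular L \<and>
      (\<forall>w\<in>lists A. \<exists>u\<in>L. (ev \<phi> u, w) \<in> congr S)"

definition automatic :: "'x set \<Rightarrow> ('x list \<times> 'x list) set \<Rightarrow> bool" where
  "automatic A S \<longleftrightarrow> (\<exists>B \<phi> L. lang_ok A S B \<phi> L \<and>
      (\<forall>g \<in> insert None (Some ` B). regular ((\<lambda>(u, v). deltaR u v) ` Lright S \<phi> L g)))"

definition biautomatic :: "'x set \<Rightarrow> ('x list \<times> 'x list) set \<Rightarrow> bool" where
  "biautomatic A S \<longleftrightarrow> (\<exists>B \<phi> L. lang_ok A S B \<phi> L \<and>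
      (\<forall>g \<in> insert None (Some ` B).
         regular ((\<lambda>(u, v). deltaR u v) ` Lright S \<phi> L g) \<and>
         regular ((\<lambda>(u, v). deltaR u v) ` Lleft S \<phi> L g) \<and>
         regular ((\<lambda>(u, v). deltaL u v) ` Lright S \<phi> L g) \<and>
         regular ((\<lambda>(u, v). deltaL u v) ` Lleft S \<phi> L g)))"

datatype letter = a | b | c

definition R0 :: "(letter list \<times> letter list) set" where
  "R0 = {([c,b,a,b], [c,b,c,b]), ([c,b,b,b], [c,b,c,b]), ([c,b,c,a], [c,a,c,b]),
         ([c,b,a,a], [c,b,c,a]), ([c,b,b,a], [c,b,c,a]), ([c,a,a,b], [c,a,c,b]),
         ([c,a,b,b], [c,a,c,b]), ([c,a,a,a], [c,a,c,a]), ([c,a,b,a], [c,a,c,a])}"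

end

theory Submission
  imports Defs
begin

text \<open>Every rule of R0 increases the value of a word read as a base-3 numeral, so R0 terminates.
  Its only overlaps are those of c b c a with c a p q (p, q \<noteq> c); the critical peaks in
  c b c a p q are resolvable, so R0 is complete, and the four pairs of resolving paths form a
  finite homotopy base, which gives finite derivation type by Squier's argument.

  For an irreducible word u and a generator z, the normal form of u z differs from u only in a
  bounded suffix, except for u = w (c b)^k c b y and z = a, where c b c a \<rightarrow> c a c b moves the
  a through the whole block, giving w c a (c b)^(k+1). Written letter against letter, these
  pairs are still recognised by a finite automaton, so normal forms form an automatic structure.

  M is not biautomatic: the c-free words a b^2N a^2N and a^(2N+1) b^2N have unique
  representatives and become equal after left multiplication by c. Regularity of the padded
  left-multiplication relation by c would make the midpoints of both words stay close to
  one representative of their common product, but the number of letters b at odd distance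
  after a preceding c is invariant under R0 and is about N for the first midpoint and 0 for
  the second.\<close>

section \<open>String rewriting\<close>

lemma rstepI: "(l, r) \<in> R \<Longrightarrow> (x @ l @ y, x @ r @ y) \<in> rstep R"
  unfolding rstep_def by blast

lemma rstepI': "(l, r) \<in> R \<Longrightarrow> s = x @ l @ y \<Longrightarrow> t = x @ r @ y \<Longrightarrow> (s, t) \<in> rstep R"
  using rstepI by blast

lemma rstepE:
  assumes "(s, t) \<in> rstep R"
  obtains x l r y where "s = x @ l @ y" "t = x @ r @ y" "(l, r) \<in> R"
  using assms unfolding rstep_def by blast

lemma rstep_ctx: "(s, t) \<in> rstep R \<Longrightarrow> (u @ s @ v, u @ t @ v) \<in> rstep R"
  by (erule rstepE) (rule rstepI'[where x = "u @ _" and y = "_ @ v"], auto)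

lemma rtrancl_rstep_ctx: "(s, t) \<in> (rstep R)\<^sup>* \<Longrightarrow> (u @ s @ v, u @ t @ v) \<in> (rstep R)\<^sup>*"
  by (induction rule: rtrancl_induct) (auto intro: rtrancl_into_rtrancl rstep_ctx)

lemma congr_refl [simp]: "(s, s) \<in> congr R"
  unfolding congr_def by simp

lemma congr_sym: "(s, t) \<in> congr R \<Longrightarrow> (t, s) \<in> congr R"
  unfolding congr_def by (metis converse_Un converse_converse rtrancl_converseI sup_commute)

lemma congr_trans: "(s, t) \<in> congr R \<Longrightarrow> (t, w) \<in> congr R \<Longrightarrow> (s, w) \<in> congr R"
  unfolding congr_def by (rule rtrancl_trans)

lemma congr_ctx: "(s, t) \<in> congr R \<Longrightarrow> (u @ s @ v, u @ t @ v) \<in> congr R"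
  unfolding congr_def
proof (induction rule: rtrancl_induct)
  case (step y z)
  then have "(u @ y @ v, u @ z @ v) \<in> rstep R \<union> (rstep R)\<inverse>"
    using rstep_ctx by blast
  with step.IH show ?case by (rule rtrancl_into_rtrancl)
qed simp

lemma rtrancl_rstep_congr: "(s, t) \<in> (rstep R)\<^sup>* \<Longrightarrow> (s, t) \<in> congr R"
  unfolding congr_def by (meson in_rtrancl_UnI)

lemma rule_congr: "(l, r) \<in> R \<Longrightarrow> (x @ l @ y, x @ r @ y) \<in> congr R"
  using rstepI rtrancl_rstep_congr by blast

lemma congr_length:
  assumes "\<forall>(l, r) \<in> R. length l = length r" and "(s, t) \<in> congr R"
  shows "length s = length t"
  using assms(2) unfolding congr_def
  by (induction rule: rtrancl_induct) (use assms(1) in \<open>auto elim!: rstepE\<close>)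

lemma congr_isolated:
  assumes "(u, v) \<in> congr R" and "\<And>w. (u, w) \<in> rstep R \<union> (rstep R)\<inverse> \<Longrightarrow> False"
  shows "v = u"
  using assms(1) unfolding congr_def
  by (induction rule: rtrancl_induct) (use assms(2) in blast)+

lemma rstep_map:
  assumes "\<forall>(l, r) \<in> R. (map h l, map h r) \<in> S" and "(u, v) \<in> rstep R"
  shows "(map h u, map h v) \<in> rstep S"
  using assms(2) by (rule rstepE) (use assms(1) in \<open>auto intro: rstepI'\<close>)

lemma rtrancl_rstep_map:
  assumes "\<forall>(l, r) \<in> R. (map h l, map h r) \<in> S" and "(u, v) \<in> (rstep R)\<^sup>*"
  shows "(map h u, map h v) \<in> (rstep S)\<^sup>*"
  using assms(2)
  by (induction rule: rtrancl_induct) (auto intro: rtrancl_into_rtrancl rstep_map[OF assms(1)])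

lemma congr_map:
  assumes "\<forall>(l, r) \<in> R. (map h l, map h r) \<in> S" and "(u, v) \<in> congr R"
  shows "(map h u, map h v) \<in> congr S"
  using assms(2) unfolding congr_def
proof (induction rule: rtrancl_induct)
  case (step y z)
  then have "(map h y, map h z) \<in> rstep S \<union> (rstep S)\<inverse>"
    using rstep_map[OF assms(1)] by blast
  with step.IH show ?case by (rule rtrancl_into_rtrancl)
qed simp

lemma noetherian_map:
  assumes "\<forall>(l, r) \<in> S. (map h l, map h r) \<in> R" and "noetherian R"
  shows "noetherian S"
proof -
  have "(rstep S)\<inverse> \<subseteq> inv_image ((rstep R)\<inverse>) (map h)"
    using rstep_map[OF assms(1)] by auto
  then show ?thesis
    using assms(2) wf_subset unfolding noetherian_def by (metis wf_inv_image)
qed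

lemma confluent_map:
  assumes "\<forall>(l, r) \<in> R. (map h l, map h r) \<in> S" and "\<forall>(l, r) \<in> S. (map g l, map g r) \<in> R"
    and "\<And>x. g (h x) = x" and "confluent S"
  shows "confluent R"
  unfolding confluent_def
proof (intro allI impI)
  fix u v w assume "(u, v) \<in> (rstep R)\<^sup>* \<and> (u, w) \<in> (rstep R)\<^sup>*"
  then have "(map h u, map h v) \<in> (rstep S)\<^sup>*" "(map h u, map h w) \<in> (rstep S)\<^sup>*"
    using rtrancl_rstep_map[OF assms(1)] by blast+
  then obtain z where "(map h v, z) \<in> (rstep S)\<^sup>*" "(map h w, z) \<in> (rstep S)\<^sup>*"
    using assms(4) unfolding confluent_def by blast
  then have "(map g (map h v), map g z) \<in> (rstep R)\<^sup>*" "(map g (map h w), map g z) \<in> (rstep R)\<^sup>*"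
    using rtrancl_rstep_map[OF assms(2)] by blast+
  then show "\<exists>z. (v, z) \<in> (rstep R)\<^sup>* \<and> (w, z) \<in> (rstep R)\<^sup>*"
    using assms(3) by (auto simp: map_idI)
qed

definition irreducible :: "('x list \<times> 'x list) set \<Rightarrow> 'x list \<Rightarrow> bool" where
  "irreducible R w \<longleftrightarrow> (\<forall>w'. (w, w') \<notin> rstep R)"

lemma irreducible_rtrancl_eq: "irreducible R w \<Longrightarrow> (w, v) \<in> (rstep R)\<^sup>* \<Longrightarrow> v = w"
  unfolding irreducible_def by (metis converse_rtranclE)

lemma noetherian_normal_form:
  assumes "noetherian R"
  shows "\<exists>n. (w, n) \<in> (rstep R)\<^sup>* \<and> irreducible R n"
  using assms[unfolded noetherian_def]
proof (induction w rule: wf_induct_rule)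
  case (less w)
  show ?case
  proof (cases "irreducible R w")
    case False
    then obtain v where "(w, v) \<in> rstep R" unfolding irreducible_def by blast
    then show ?thesis using less by (meson converse_rtrancl_into_rtrancl converseI)
  qed blast
qed

lemma newman:
  assumes "noetherian R"
    and local: "\<And>u v w. (u, v) \<in> rstep R \<Longrightarrow> (u, w) \<in> rstep R \<Longrightarrow>
      \<exists>z. (v, z) \<in> (rstep R)\<^sup>* \<and> (w, z) \<in> (rstep R)\<^sup>*"
  shows "confluent R"
proof -
  have "\<exists>z. (v, z) \<in> (rstep R)\<^sup>* \<and> (w, z) \<in> (rstep R)\<^sup>*"
    if "(u, v) \<in> (rstep R)\<^sup>*" "(u, w) \<in> (rstep R)\<^sup>*" for u v w
    using assms(1)[unfolded noetherian_def] that
  proof (induction u arbitrary: v w rule: wf_induct_rule)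
    case (less u)
    show ?case
    proof (cases "u = v \<or> u = w")
      case False
      then obtain v1 w1 where v1: "(u, v1) \<in> rstep R" "(v1, v) \<in> (rstep R)\<^sup>*"
        and w1: "(u, w1) \<in> rstep R" "(w1, w) \<in> (rstep R)\<^sup>*"
        using less.prems by (metis converse_rtranclE)
      obtain z where z: "(v1, z) \<in> (rstep R)\<^sup>*" "(w1, z) \<in> (rstep R)\<^sup>*"
        using local[OF v1(1) w1(1)] by blast
      obtain z1 where z1: "(v, z1) \<in> (rstep R)\<^sup>*" "(z, z1) \<in> (rstep R)\<^sup>*"
        using less.IH v1 z by blast
      obtain z2 where "(w, z2) \<in> (rstep R)\<^sup>*" "(z1, z2) \<in> (rstep R)\<^sup>*"
        using less.IH[of w1 w z1] w1 z(2) z1(2) by (meson converseI rtrancl_trans)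
      then show ?thesis using z1(1) by (meson rtrancl_trans)
    qed (use less.prems in blast)
  qed
  then show ?thesis unfolding confluent_def by blast
qed

lemma confluent_congr_join:
  assumes "confluent R" and "(s, t) \<in> congr R"
  shows "\<exists>z. (s, z) \<in> (rstep R)\<^sup>* \<and> (t, z) \<in> (rstep R)\<^sup>*"
  using assms(2) unfolding congr_def
proof (induction rule: rtrancl_induct)
  case (step y z)
  then obtain z0 where z0: "(s, z0) \<in> (rstep R)\<^sup>*" "(y, z0) \<in> (rstep R)\<^sup>*" by blast
  show ?case
  proof (cases "(y, z) \<in> rstep R")
    case True
    then obtain z1 where "(z, z1) \<in> (rstep R)\<^sup>*" "(z0, z1) \<in> (rstep R)\<^sup>*"
      using assms(1) z0(2) unfolding confluent_def by blast
    then show ?thesis using z0(1) by (meson rtrancl_trans)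
  next
    case False
    then have "(z, y) \<in> rstep R" using step by blast
    then show ?thesis using z0 by (meson converse_rtrancl_into_rtrancl)
  qed
qed blast

lemma congr_irreducible_eq:
  "confluent R \<Longrightarrow> (s, t) \<in> congr R \<Longrightarrow> irreducible R s \<Longrightarrow> irreducible R t \<Longrightarrow> s = t"
  using confluent_congr_join irreducible_rtrancl_eq by metis

lemma ev_append [simp]: "ev f (u @ v) = ev f u @ ev f v"
  and ev_Nil [simp]: "ev f [] = []"
  and ev_Cons [simp]: "ev f (x # u) = f x @ ev f u"
  by (simp_all add: ev_def)

section \<open>Squier's theorem\<close>

definition positive :: "'x edge \<Rightarrow> bool" where
  "positive e \<longleftrightarrow> fst (snd (snd e))"

lemma positive_simp [simp]: "positive (x, \<rho>, d, y) = d"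
  by (simp add: positive_def)

lemma chain_append: "chain w (es1 @ es2) \<longleftrightarrow> chain w es1 \<and> chain (ptgt w es1) es2"
  by (induction es1 arbitrary: w) auto

lemma ptgt_append: "ptgt w (es1 @ es2) = ptgt (ptgt w es1) es2"
  by (induction es1 arbitrary: w) auto

lemma esrc_einv [simp]: "esrc (einv e) = etgt e"
  and etgt_einv [simp]: "etgt (einv e) = esrc e"
  and positive_einv [simp]: "positive (einv e) \<longleftrightarrow> \<not> positive e"
  by (cases e; auto)+

lemma dedges_einv: "e \<in> dedges X R \<Longrightarrow> einv e \<in> dedges X R"
  by (cases e) (auto simp: dedges_def)

lemma dedges_lists:
  assumes "R \<subseteq> lists X \<times> lists X" and "e \<in> dedges X R"
  shows "esrc e \<in> lists X" "etgt e \<in> lists X"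
proof -
  obtain x l r d y where "e = (x, (l, r), d, y)" by (cases e) auto
  with assms show "esrc e \<in> lists X" "etgt e \<in> lists X" by (auto simp: dedges_def)
qed

lemma dpaths_Nil [simp]: "(u, []) \<in> dpaths X R \<longleftrightarrow> u \<in> lists X"
  by (simp add: dpaths_def)

lemma dpaths_Cons:
  assumes "R \<subseteq> lists X \<times> lists X"
  shows "(u, e # es) \<in> dpaths X R \<longleftrightarrow> e \<in> dedges X R \<and> esrc e = u \<and> (etgt e, es) \<in> dpaths X R"
proof -
  have "e \<in> dedges X R \<Longrightarrow> esrc e \<in> lists X \<and> etgt e \<in> lists X"
    using dedges_lists[OF assms] by blast
  then show ?thesis unfolding dpaths_def by auto
qed

lemma ptgt_lists:
  assumes "R \<subseteq> lists X \<times> lists X" and "(u, es) \<in> dpaths X R"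
  shows "ptgt u es \<in> lists X"
  using assms(2) by (induction es arbitrary: u) (auto simp: dpaths_Cons[OF assms(1)])

lemma dpaths_append:
  assumes "R \<subseteq> lists X \<times> lists X"
  shows "(u, es1 @ es2) \<in> dpaths X R \<longleftrightarrow> (u, es1) \<in> dpaths X R \<and> (ptgt u es1, es2) \<in> dpaths X R"
  using ptgt_lists[OF assms, of u es1] by (auto simp: dpaths_def chain_append)

lemma dpaths_inverse:
  assumes "R \<subseteq> lists X \<times> lists X" and "(u, es) \<in> dpaths X R"
  shows "(ptgt u es, rev (map einv es)) \<in> dpaths X R \<and> ptgt (ptgt u es) (rev (map einv es)) = u"
  using assms(2)
proof (induction es arbitrary: u)
  case (Cons e es)
  then have "u \<in> lists X" by (simp add: dpaths_def)
  with Cons show ?case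
    by (simp add: dpaths_Cons[OF assms(1)] dpaths_append[OF assms(1)] ptgt_append dedges_einv
        del: ectx.simps)
qed simp

lemma positive_edge_rstep:
  assumes "e \<in> dedges X R" and "positive e"
  shows "(esrc e, etgt e) \<in> rstep R"
proof -
  obtain x l r y where "e = (x, (l, r), True, y)" using assms(2) by (cases e) auto
  with assms(1) show ?thesis by (auto simp: dedges_def intro: rstepI)
qed

lemma rstep_positive_edge:
  assumes "(u, v) \<in> rstep R" and "u \<in> lists X"
  obtains e where "e \<in> dedges X R" "positive e" "esrc e = u" "etgt e = v"
proof -
  obtain x l r y where *: "u = x @ l @ y" "v = x @ r @ y" "(l, r) \<in> R"
    using assms(1) by (rule rstepE)
  then show ?thesis
    using assms(2) by (intro that[of "(x, (l, r), True, y)"]) (auto simp: dedges_def)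
qed

lemma positive_path_rtrancl:
  assumes "(u, es) \<in> dpaths X R" and "list_all positive es"
  shows "(u, ptgt u es) \<in> (rstep R)\<^sup>*"
proof -
  have "chain u es" "set es \<subseteq> dedges X R" using assms(1) by (simp_all add: dpaths_def)
  then show ?thesis using assms(2)
  proof (induction es arbitrary: u)
    case (Cons e es)
    then have "(u, etgt e) \<in> rstep R" using positive_edge_rstep by fastforce
    with Cons show ?case by (auto intro: converse_rtrancl_into_rtrancl)
  qed simp
qed

lemma reduction_path_exists:
  assumes RX: "R \<subseteq> lists X \<times> lists X" and "noetherian R" and "u \<in> lists X"
  shows "\<exists>es. (u, es) \<in> dpaths X R \<and> list_all positive es \<and> irreducible R (ptgt u es)"
  using assms(2)[unfolded noetherian_def] assms(3)
proof (induction u rule: wf_induct_rule)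
  case (less u)
  show ?case
  proof (cases "irreducible R u")
    case False
    then obtain v where v: "(u, v) \<in> rstep R" unfolding irreducible_def by blast
    then obtain e where e: "e \<in> dedges X R" "positive e" "esrc e = u" "etgt e = v"
      using less.prems by (rule rstep_positive_edge)
    obtain es where "(v, es) \<in> dpaths X R" "list_all positive es" "irreducible R (ptgt v es)"
      using less.IH v e dedges_lists[OF RX e(1)] by blast
    then show ?thesis
      using e by (intro exI[of _ "e # es"]) (simp add: dpaths_Cons[OF RX])
  qed (use less.prems in \<open>intro exI[of _ "[]"], simp\<close>)
qed

lemma htpy_prepend:
  assumes RX: "R \<subseteq> lists X \<times> lists X"
    and "((w, es1), (w, es2)) \<in> htpy X R Bs" "(w, es1) \<in> dpaths X R"
    and "(u, rs) \<in> dpaths X R" "ptgt u rs = w"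
  shows "((u, rs @ es1), (u, rs @ es2)) \<in> htpy X R Bs"
proof -
  have "(ptgt w es1, []) \<in> dpaths X R" using ptgt_lists[OF RX assms(3)] by simp
  from htpy.comp[OF assms(2) assms(4) this] show ?thesis
    using assms(5) by (simp add: pcomp_def pend_def pstart_def)
qed

lemma htpy_append:
  assumes "((w, es1), (w, es2)) \<in> htpy X R Bs" "(w, es1) \<in> dpaths X R"
    and "(v, ss) \<in> dpaths X R" "ptgt w es1 = v"
  shows "((w, es1 @ ss), (w, es2 @ ss)) \<in> htpy X R Bs"
proof -
  have "(w, []) \<in> dpaths X R" using assms(2) by (simp add: dpaths_def)
  from htpy.comp[OF assms(1) this assms(3)] show ?thesis
    using assms(4) by (simp add: pcomp_def pend_def pstart_def)
qed

lemma htpy_cancel: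
  assumes "(u, [e]) \<in> dpaths X R"
  shows "((u, [e, einv e]), (u, [])) \<in> htpy X R Bs"
  using htpy.inv[OF assms] assms by (simp add: pcomp_def pinv_def pstart_def pend_def dpaths_def)

definition peak_resolved ::
    "'x set \<Rightarrow> ('x list \<times> 'x list) set \<Rightarrow> ('x dpath \<times> 'x dpath) set \<Rightarrow> 'x edge \<Rightarrow> 'x edge \<Rightarrow> bool"
  where
  "peak_resolved X R Bs e1 e2 \<longleftrightarrow> (\<exists>r1 r2. (etgt e1, r1) \<in> dpaths X R \<and> (etgt e2, r2) \<in> dpaths X R \<and>
     list_all positive r1 \<and> list_all positive r2 \<and> ptgt (etgt e1) r1 = ptgt (etgt e2) r2 \<and>
     ((esrc e1, e1 # r1), (esrc e1, e2 # r2)) \<in> htpy X R Bs)"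

definition resolves_local_peaks ::
    "'x set \<Rightarrow> ('x list \<times> 'x list) set \<Rightarrow> ('x dpath \<times> 'x dpath) set \<Rightarrow> bool" where
  "resolves_local_peaks X R Bs \<longleftrightarrow> (\<forall>e1 e2. e1 \<in> dedges X R \<longrightarrow> e2 \<in> dedges X R \<longrightarrow>
     positive e1 \<longrightarrow> positive e2 \<longrightarrow> esrc e1 = esrc e2 \<longrightarrow> peak_resolved X R Bs e1 e2)"

lemma peak_resolved_sym:
  "esrc e1 = esrc e2 \<Longrightarrow> peak_resolved X R Bs e1 e2 \<Longrightarrow> peak_resolved X R Bs e2 e1"
  unfolding peak_resolved_def by (metis htpy.sym)

lemma peak_resolved_refl:
  assumes "R \<subseteq> lists X \<times> lists X" and "e \<in> dedges X R"
  shows "peak_resolved X R Bs e e"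
  unfolding peak_resolved_def
  using assms dedges_lists[OF assms] htpy.refl[of "(esrc e, [e])"]
  by (intro exI[of _ "[]"]) (simp add: dpaths_Cons)

lemma peak_resolved_disjoint:
  assumes "R \<subseteq> lists X \<times> lists X" and "(l1, r1) \<in> R" "(l2, r2) \<in> R"
    and "x \<in> lists X" "m \<in> lists X" "y \<in> lists X"
  shows "peak_resolved X R Bs (x, (l1, r1), True, m @ l2 @ y) (x @ l1 @ m, (l2, r2), True, y)"
proof -
  let ?e1 = "(x, (l1, r1), True, [])" and ?e2 = "(m, (l2, r2), True, y)"
  have "?e1 \<in> dedges X R" "?e2 \<in> dedges X R" using assms by (auto simp: dedges_def)
  from htpy.indep[OF this] show ?thesis
    unfolding peak_resolved_def using assms
    by (intro exI[of _ "[(x @ r1 @ m, (l2, r2), True, y)]"] exI[of _ "[(x, (l1, r1), True, m @ r2 @ y)]"])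
       (auto simp: dpaths_def dedges_def)
qed

lemma esrc_ectx [simp]: "esrc (ectx x e y) = x @ esrc e @ y"
  and etgt_ectx [simp]: "etgt (ectx x e y) = x @ etgt e @ y"
  and positive_ectx [simp]: "positive (ectx x e y) = positive e"
  by (cases e; auto)+

lemma dpaths_ctx:
  assumes "R \<subseteq> lists X \<times> lists X" and "(w, es) \<in> dpaths X R" "x \<in> lists X" "y \<in> lists X"
  shows "(x @ w @ y, map (\<lambda>e. ectx x e y) es) \<in> dpaths X R \<and>
    ptgt (x @ w @ y) (map (\<lambda>e. ectx x e y) es) = x @ ptgt w es @ y"
  using assms(2)
proof (induction es arbitrary: w)
  case (Cons e es)
  have "ectx x e y \<in> dedges X R" using Cons.prems assms(3,4)
    by (cases e) (auto simp: dpaths_Cons[OF assms(1)] dedges_def)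
  with Cons show ?case by (simp add: dpaths_Cons[OF assms(1)] del: ectx.simps)
qed (use assms in simp)

lemma peak_resolved_base_ctx:
  assumes RX: "R \<subseteq> lists X \<times> lists X" and base: "((w, e1 # r1), (w, e2 # r2)) \<in> Bs"
    and p: "(w, e1 # r1) \<in> dpaths X R" "(w, e2 # r2) \<in> dpaths X R"
      "list_all positive (e1 # r1)" "list_all positive (e2 # r2)" "ptgt w (e1 # r1) = ptgt w (e2 # r2)"
    and xy: "x \<in> lists X" "y \<in> lists X"
  shows "peak_resolved X R Bs (ectx x e1 y) (ectx x e2 y)"
proof -
  let ?f = "\<lambda>e. ectx x e y"
  have "(pctx x (w, e1 # r1) y, pctx x (w, e2 # r2) y) \<in> htpy X R Bs"
    using htpy.ctx[OF htpy.base[OF base] xy] .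
  moreover have "esrc e1 = w" using p(1) by (simp add: dpaths_Cons[OF RX])
  moreover have "(etgt (?f e1), map ?f r1) \<in> dpaths X R" "(etgt (?f e2), map ?f r2) \<in> dpaths X R"
    "ptgt (etgt (?f e1)) (map ?f r1) = ptgt (etgt (?f e2)) (map ?f r2)"
    using dpaths_ctx[OF RX p(1) xy] dpaths_ctx[OF RX p(2) xy] p(5)
    by (simp_all add: dpaths_Cons[OF RX] del: ectx.simps)
  ultimately show ?thesis
    unfolding peak_resolved_def using p(3,4)
    by (intro exI[of _ "map ?f r1"] exI[of _ "map ?f r2"]) (simp add: pctx_def list.pred_map comp_def del: ectx.simps)
qed

abbreviation reduces_to_nf :: "'x set \<Rightarrow> ('x list \<times> 'x list) set \<Rightarrow> 'x list \<Rightarrow> 'x edge list \<Rightarrow> bool" where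
  "reduces_to_nf X R u es \<equiv> (u, es) \<in> dpaths X R \<and> list_all positive es \<and> irreducible R (ptgt u es)"

lemma htpy_reduction_paths_step:
  assumes RX: "R \<subseteq> lists X \<times> lists X" and "noetherian R" and res: "resolves_local_peaks X R Bs"
    and IH: "\<And>v t t'. (esrc e1, v) \<in> rstep R \<Longrightarrow> reduces_to_nf X R v t \<Longrightarrow>
      reduces_to_nf X R v t' \<Longrightarrow> ((v, t), (v, t')) \<in> htpy X R Bs"
    and p1: "reduces_to_nf X R (esrc e1) (e1 # t1)" and p2: "reduces_to_nf X R (esrc e1) (e2 # t2)"
  shows "((esrc e1, e1 # t1), (esrc e1, e2 # t2)) \<in> htpy X R Bs"
proof -
  let ?u = "esrc e1"
  have e1: "e1 \<in> dedges X R" "positive e1" "(etgt e1, t1) \<in> dpaths X R"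
    and e2: "e2 \<in> dedges X R" "positive e2" "esrc e2 = ?u" "(etgt e2, t2) \<in> dpaths X R"
    using p1 p2 by (auto simp: dpaths_Cons[OF RX])
  obtain r1 r2 where r: "(etgt e1, r1) \<in> dpaths X R" "(etgt e2, r2) \<in> dpaths X R"
      "list_all positive r1" "list_all positive r2" "ptgt (etgt e1) r1 = ptgt (etgt e2) r2"
      and peak: "((?u, e1 # r1), (?u, e2 # r2)) \<in> htpy X R Bs"
    using res e1(1,2) e2(1-3) unfolding resolves_local_peaks_def peak_resolved_def by metis
  define w where "w = ptgt (etgt e1) r1"
  obtain s where s: "(w, s) \<in> dpaths X R" "list_all positive s" "irreducible R (ptgt w s)"
    using reduction_path_exists[OF RX assms(2) ptgt_lists[OF RX r(1)]] w_def by blast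
  have "((etgt e1, t1), (etgt e1, r1 @ s)) \<in> htpy X R Bs"
    using IH positive_edge_rstep[OF e1(1,2)] e1(3) p1 r(1,3) s w_def
    by (simp add: dpaths_append[OF RX] ptgt_append)
  then have A: "((?u, e1 # t1), (?u, e1 # r1 @ s)) \<in> htpy X R Bs"
    using htpy_prepend[OF RX _ e1(3), where u = ?u and rs = "[e1]"] e1 dedges_lists[OF RX e1(1)] by (simp add: dpaths_Cons[OF RX])
  have "((etgt e2, t2), (etgt e2, r2 @ s)) \<in> htpy X R Bs"
    using IH positive_edge_rstep[OF e2(1,2)] e2 p2 r s w_def
    by (simp add: dpaths_append[OF RX] ptgt_append)
  then have B: "((?u, e2 # t2), (?u, e2 # r2 @ s)) \<in> htpy X R Bs"
    using htpy_prepend[OF RX _ e2(4), where u = ?u and rs = "[e2]"] e2 dedges_lists[OF RX e2(1)] by (simp add: dpaths_Cons[OF RX])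
  have "((?u, e1 # r1 @ s), (?u, e2 # r2 @ s)) \<in> htpy X R Bs"
    using htpy_append[OF peak _ s(1)] e1 r(1) w_def by (simp add: dpaths_Cons[OF RX])
  then show ?thesis using A B by (meson htpy.sym htpy.trans)
qed

lemma htpy_reduction_paths:
  assumes RX: "R \<subseteq> lists X \<times> lists X" and noeth: "noetherian R"
    and res: "resolves_local_peaks X R Bs"
  shows "reduces_to_nf X R u es1 \<Longrightarrow> reduces_to_nf X R u es2 \<Longrightarrow>
    ((u, es1), (u, es2)) \<in> htpy X R Bs"
  using noeth[unfolded noetherian_def]
proof (induction u arbitrary: es1 es2 rule: wf_induct_rule)
  case (less u)
  show ?case
  proof (cases es1)
    case Nil
    then have irr: "irreducible R u" using less.prems by simp
    show ?thesis
    proof (cases es2)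
      case (Cons e t)
      then have "(u, etgt e) \<in> rstep R"
        using less.prems(2) positive_edge_rstep by (fastforce simp: dpaths_Cons[OF RX])
      then show ?thesis using irr unfolding irreducible_def by blast
    qed (use Nil less.prems htpy.refl in metis)
  next
    case (Cons e1 t1)
    then have "(u, etgt e1) \<in> rstep R" "esrc e1 = u"
      using less.prems(1) positive_edge_rstep by (fastforce simp: dpaths_Cons[OF RX])+
    then obtain e2 t2 where es2: "es2 = e2 # t2"
      using less.prems(2) by (cases es2) (auto simp: irreducible_def)
    have "((esrc e1, e1 # t1), (esrc e1, e2 # t2)) \<in> htpy X R Bs"
      by (rule htpy_reduction_paths_step[OF RX noeth res]) (use less Cons es2 \<open>esrc e1 = u\<close> in auto)
    then show ?thesis using Cons es2 \<open>esrc e1 = u\<close> by simp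
  qed
qed

definition reduction_path :: "'x set \<Rightarrow> ('x list \<times> 'x list) set \<Rightarrow> 'x list \<Rightarrow> 'x edge list" where
  "reduction_path X R w = (SOME es. reduces_to_nf X R w es)"

lemma reduction_path:
  assumes "R \<subseteq> lists X \<times> lists X" and "noetherian R" and "w \<in> lists X"
  shows "reduces_to_nf X R w (reduction_path X R w)"
  using reduction_path_exists[OF assms] unfolding reduction_path_def by (rule someI_ex)

definition nf :: "'x set \<Rightarrow> ('x list \<times> 'x list) set \<Rightarrow> 'x list \<Rightarrow> 'x list" where
  "nf X R w = ptgt w (reduction_path X R w)"

lemma nf_edge:
  assumes RX: "R \<subseteq> lists X \<times> lists X" and noeth: "noetherian R" and conf: "confluent R"
    and e: "e \<in> dedges X R"
  shows "nf X R (etgt e) = nf X R (esrc e)"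
proof -
  have "(w, nf X R w) \<in> (rstep R)\<^sup>* \<and> irreducible R (nf X R w)" if "w \<in> lists X" for w
    using reduction_path[OF RX noeth that] positive_path_rtrancl unfolding nf_def by blast
  then have nfs: "(esrc e, nf X R (esrc e)) \<in> (rstep R)\<^sup>*" "(etgt e, nf X R (etgt e)) \<in> (rstep R)\<^sup>*"
      "irreducible R (nf X R (esrc e))" "irreducible R (nf X R (etgt e))"
    using dedges_lists[OF RX e] by blast+
  have "(esrc e, etgt e) \<in> congr R"
    using positive_edge_rstep[OF e] positive_edge_rstep[OF dedges_einv[OF e]]
    by (cases "positive e") (auto intro: rtrancl_rstep_congr congr_sym)
  then have "(nf X R (etgt e), nf X R (esrc e)) \<in> congr R"
    using nfs(1,2) by (meson congr_sym congr_trans rtrancl_rstep_congr)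
  then show ?thesis using congr_irreducible_eq[OF conf] nfs(3,4) by blast
qed

lemma nf_ptgt:
  assumes "R \<subseteq> lists X \<times> lists X" and "noetherian R" and "confluent R"
  shows "(u, es) \<in> dpaths X R \<Longrightarrow> nf X R (ptgt u es) = nf X R u"
  by (induction es arbitrary: u) (auto simp: dpaths_Cons[OF assms(1)] nf_edge[OF assms])

text \<open>For a negative edge, Squier's lemma is applied to its inverse and the edge is cancelled.\<close>

lemma htpy_edge_reduction:
  assumes RX: "R \<subseteq> lists X \<times> lists X" and noeth: "noetherian R"
    and res: "resolves_local_peaks X R Bs" and e: "e \<in> dedges X R"
  shows "((esrc e, e # reduction_path X R (etgt e)), (esrc e, reduction_path X R (esrc e)))
    \<in> htpy X R Bs"
proof -
  let ?u = "esrc e" and ?v = "etgt e" and ?e' = "einv e"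
  let ?pu = "reduction_path X R ?u" and ?pv = "reduction_path X R ?v"
  have u: "reduces_to_nf X R ?u ?pu" and v: "reduces_to_nf X R ?v ?pv"
    using reduction_path[OF RX noeth] dedges_lists[OF RX e] by blast+
  have uv: "?u \<in> lists X" "?v \<in> lists X" using dedges_lists[OF RX e] by blast+
  have e': "?e' \<in> dedges X R" using dedges_einv[OF e] .
  show ?thesis
  proof (cases "positive e")
    case True
    have "reduces_to_nf X R ?u (e # ?pv)"
      using v e True by (simp add: dpaths_Cons[OF RX])
    then show ?thesis using htpy_reduction_paths[OF RX noeth res] u by blast
  next
    case False
    have "reduces_to_nf X R ?v (?e' # ?pu)"
      using u e' False by (simp add: dpaths_Cons[OF RX])
    then have "((?v, ?e' # ?pu), (?v, ?pv)) \<in> htpy X R Bs"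
      using htpy_reduction_paths[OF RX noeth res] v by blast
    moreover have "(?v, ?e' # ?pu) \<in> dpaths X R" "(?u, [e]) \<in> dpaths X R"
      using u e e' uv by (simp_all add: dpaths_Cons[OF RX])
    ultimately have A: "((?u, [e] @ ?e' # ?pu), (?u, [e] @ ?pv)) \<in> htpy X R Bs"
      by (rule htpy_prepend[OF RX]) simp_all
    have ee: "(?u, [e, ?e']) \<in> dpaths X R"
      using e e' uv by (simp add: dpaths_Cons[OF RX])
    have "((?u, [e, ?e'] @ ?pu), (?u, [] @ ?pu)) \<in> htpy X R Bs"
      using htpy_append[OF htpy_cancel[OF \<open>(?u, [e]) \<in> dpaths X R\<close>] ee] u by simp
    from htpy.trans[OF htpy.sym[OF A[simplified]] this[simplified]] show ?thesis .
  qed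
qed

lemma htpy_via_nf:
  assumes RX: "R \<subseteq> lists X \<times> lists X" and noeth: "noetherian R" and conf: "confluent R"
    and res: "resolves_local_peaks X R Bs"
  shows "(u, es) \<in> dpaths X R \<Longrightarrow>
    ((u, es), (u, reduction_path X R u @ rev (map einv (reduction_path X R (ptgt u es)))))
      \<in> htpy X R Bs"
proof (induction es arbitrary: u)
  case Nil
  then have "(u, reduction_path X R u) \<in> dpaths X R" using reduction_path[OF RX noeth] by simp
  from htpy.sym[OF htpy.inv[OF this]] show ?case
    by (simp add: pcomp_def pinv_def pstart_def pend_def)
next
  case (Cons e t)
  let ?v = "etgt e" and ?w = "ptgt (etgt e) t"
  let ?back = "rev (map einv (reduction_path X R ?w))"
  have e: "e \<in> dedges X R" "esrc e = u" "(?v, t) \<in> dpaths X R"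
    using Cons.prems by (simp_all add: dpaths_Cons[OF RX])
  have "(u, [e]) \<in> dpaths X R"
    using e by (simp add: dpaths_Cons[OF RX] dedges_lists[OF RX e(1)])
  then have A: "((u, [e] @ t), (u, [e] @ reduction_path X R ?v @ ?back)) \<in> htpy X R Bs"
    by (rule htpy_prepend[OF RX Cons.IH[OF e(3)] e(3)]) (simp add: e(2))
  have B: "((u, (e # reduction_path X R ?v) @ ?back), (u, reduction_path X R u @ ?back))
      \<in> htpy X R Bs"
  proof (rule htpy_append)
    show "((u, e # reduction_path X R ?v), (u, reduction_path X R u)) \<in> htpy X R Bs"
      using htpy_edge_reduction[OF RX noeth res e(1)] e(2) by simp
    show "(u, e # reduction_path X R ?v) \<in> dpaths X R"
      using e reduction_path[OF RX noeth] dedges_lists[OF RX e(1)] by (simp add: dpaths_Cons[OF RX])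
    have "(?w, reduction_path X R ?w) \<in> dpaths X R"
      using reduction_path[OF RX noeth ptgt_lists[OF RX e(3)]] by blast
    then show "(nf X R ?w, ?back) \<in> dpaths X R"
      using dpaths_inverse[OF RX] unfolding nf_def by blast
    show "ptgt u (e # reduction_path X R ?v) = nf X R ?w"
      using nf_ptgt[OF RX noeth conf e(3)] e(2) by (simp add: nf_def)
  qed
  from htpy.trans[OF A] B show ?case by simp
qed

theorem FDT_pres_if_resolves_local_peaks:
  assumes "R \<subseteq> lists X \<times> lists X" and "noetherian R" and "confluent R"
    and "resolves_local_peaks X R Bs" and "finite Bs"
    and "\<forall>(p, q) \<in> Bs. p \<in> dpaths X R \<and> q \<in> dpaths X R \<and> parallel p q"
  shows "FDT_pres X R"
  unfolding FDT_pres_def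
proof (intro exI[of _ Bs] conjI ballI impI)
  fix p q assume pq: "p \<in> dpaths X R" "q \<in> dpaths X R" "parallel p q"
  obtain u es1 es2 where p: "p = (u, es1)" and q: "q = (u, es2)" and "ptgt u es1 = ptgt u es2"
    using pq(3) by (cases p, cases q) (auto simp: parallel_def pend_def pstart_def)
  then have "((u, es1), (u, reduction_path X R u @ rev (map einv (reduction_path X R (ptgt u es1)))))
      \<in> htpy X R Bs"
    "((u, es2), (u, reduction_path X R u @ rev (map einv (reduction_path X R (ptgt u es1)))))
      \<in> htpy X R Bs"
    using htpy_via_nf[OF assms(1-4)] pq(1,2) by metis+
  then show "(p, q) \<in> htpy X R Bs"
    unfolding p q by (blast intro: htpy.sym htpy.trans)
qed (use assms(5,6) in auto)

section \<open>The rewriting system R0 is complete, FCRS and FDT\<close>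

lemma R0_length: "(l, r) \<in> R0 \<Longrightarrow> length l = 4 \<and> length r = 4"
  unfolding R0_def by auto

lemma R0_length_preserving: "\<forall>(l, r) \<in> R0. length l = length r"
  using R0_length by auto

fun digit :: "letter \<Rightarrow> nat" where
  "digit a = 0" | "digit b = 1" | "digit c = 2"

fun val :: "letter list \<Rightarrow> nat" where
  "val [] = 0"
| "val (x # w) = digit x + 3 * val w"

lemma val_append: "val (u @ v) = val u + 3 ^ length u * val v"
  by (induction u) auto

lemma val_less: "val w < 3 ^ length w"
proof (induction w)
  case (Cons x w)
  have "digit x \<le> 2" by (cases x) auto
  with Cons show ?case by simp
qed simp

lemma rstep_R0_val: "(s, t) \<in> rstep R0 \<Longrightarrow> val s < val t \<and> length s = length t"
proof (erule rstepE)
  fix x l r y assume *: "s = x @ l @ y" "t = x @ r @ y" "(l, r) \<in> R0"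
  have "val l < val r" using *(3) unfolding R0_def by auto
  then show ?thesis using * R0_length by (auto simp: val_append)
qed

lemma noetherian_R0: "noetherian R0"
proof -
  have "(rstep R0)\<inverse> \<subseteq> measure (\<lambda>w. 3 ^ length w - val w)"
  proof
    fix p assume "p \<in> (rstep R0)\<inverse>"
    then obtain s t where "p = (t, s)" "(s, t) \<in> rstep R0" by auto
    with rstep_R0_val[OF this(2)] val_less[of t] show "p \<in> measure (\<lambda>w. 3 ^ length w - val w)"
      by auto
  qed
  then show ?thesis unfolding noetherian_def using wf_subset by blast
qed

fun enc :: "letter \<Rightarrow> nat" where
  "enc a = 0" | "enc b = 1" | "enc c = 2"

definition dec :: "nat \<Rightarrow> letter" where
  "dec n = (if n = 0 then a else if n = 1 then b else c)"

definition Xn :: "nat set" where "Xn = {0, 1, 2}"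

definition Rn :: "(nat list \<times> nat list) set" where
  "Rn = (\<lambda>(l, r). (map enc l, map enc r)) ` R0"

lemma dec_enc [simp]: "dec (enc x) = x"
  by (cases x) (auto simp: dec_def)

lemma enc_dec: "n \<in> Xn \<Longrightarrow> enc (dec n) = n"
  by (auto simp: Xn_def dec_def)

lemma enc_Xn [simp]: "enc x \<in> Xn"
  by (cases x) (auto simp: Xn_def)

lemma inj_enc: "inj enc"
  by (metis dec_enc injI)

lemma Rn_explicit: "Rn = {([2,1,0,1], [2,1,2,1]), ([2,1,1,1], [2,1,2,1]), ([2,1,2,0], [2,0,2,1]),
    ([2,1,0,0], [2,1,2,0]), ([2,1,1,0], [2,1,2,0]), ([2,0,0,1], [2,0,2,1]),
    ([2,0,1,1], [2,0,2,1]), ([2,0,0,0], [2,0,2,0]), ([2,0,1,0], [2,0,2,0])}"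
  unfolding Rn_def R0_def by simp

lemma Rn_lists: "Rn \<subseteq> lists Xn \<times> lists Xn"
  unfolding Rn_def by auto

lemma enc_R0: "\<forall>(l, r) \<in> R0. (map enc l, map enc r) \<in> Rn"
  unfolding Rn_def by auto

lemma dec_Rn: "\<forall>(l, r) \<in> Rn. (map dec l, map dec r) \<in> R0"
  unfolding Rn_def by (auto simp: comp_def)

lemma noetherian_Rn: "noetherian Rn"
  using noetherian_map[OF dec_Rn noetherian_R0] .

lemma append_eq_redex_cases:
  assumes "x1 @ l1 @ y1 = x2 @ l2 @ y2" and "length x1 \<le> length x2"
  shows "(\<exists>m. x2 = x1 @ l1 @ m \<and> y1 = m @ l2 @ y2) \<or>
    (\<exists>k < length l1. x2 = x1 @ take k l1 \<and> drop k l1 @ y1 = l2 @ y2)"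
proof -
  obtain z where z: "x2 = x1 @ z"
    using assms by (metis append_eq_append_conv_if append_eq_conv_conj)
  with assms(1) have eq: "l1 @ y1 = z @ l2 @ y2" by simp
  show ?thesis
  proof (cases "length z < length l1")
    case True
    then have "z = take (length z) l1" "drop (length z) l1 @ y1 = l2 @ y2"
      using arg_cong[OF eq, of "take (length z)"] arg_cong[OF eq, of "drop (length z)"] by simp_all
    then show ?thesis using True z by blast
  next
    case False
    then obtain m where "z = l1 @ m"
      using eq by (metis append_eq_append_conv_if append_eq_conv_conj not_less)
    then show ?thesis using z eq by auto
  qed
qed

lemma R0_overlap:
  assumes "k < 4" "(l1, r1) \<in> R0" "(l2, r2) \<in> R0" "drop k l1 @ y1 = l2 @ y2"
  shows "(k = 0 \<and> l1 = l2 \<and> r1 = r2 \<and> y1 = y2) \<or>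
    (k = 2 \<and> (\<exists>p q. p \<noteq> c \<and> q \<noteq> c \<and> l1 = [c,b,c,a] \<and> r1 = [c,a,c,b] \<and>
       l2 = [c,a,p,q] \<and> r2 = [c,a,c,q] \<and> y1 = [p,q] @ y2))"
proof -
  consider "k = 0" | "k = 1" | "k = 2" | "k = 3" using assms(1) by linarith
  then show ?thesis using assms(2-4) unfolding R0_def by cases auto
qed

lemma Rn_overlap:
  assumes "k < 4" "(l1, r1) \<in> Rn" "(l2, r2) \<in> Rn" "drop k l1 @ y1 = l2 @ y2"
  shows "(k = 0 \<and> l1 = l2 \<and> r1 = r2 \<and> y1 = y2) \<or>
    (k = 2 \<and> (\<exists>p\<in>{0,1}. \<exists>q\<in>{0,1}. l1 = [2,1,2,0] \<and> r1 = [2,0,2,1] \<and>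
       l2 = [2,0,p,q] \<and> r2 = [2,0,2,q] \<and> y1 = [p,q] @ y2))"
proof -
  obtain l1' r1' l2' r2' where R0: "(l1', r1') \<in> R0" "(l2', r2') \<in> R0"
    and enc: "l1 = map enc l1'" "r1 = map enc r1'" "l2 = map enc l2'" "r2 = map enc r2'"
    using assms(2,3) unfolding Rn_def by auto
  have "drop k l1' @ map dec y1 = l2' @ map dec y2"
    using arg_cong[OF assms(4), of "map dec"] enc by (simp add: drop_map comp_def)
  from R0_overlap[OF assms(1) R0 this] show ?thesis
  proof (elim disjE exE conjE)
    fix p q assume "k = 2" "p \<noteq> c" "q \<noteq> c" "l1' = [c,b,c,a]" "r1' = [c,a,c,b]"
      "l2' = [c,a,p,q]" "r2' = [c,a,c,q]"
    moreover have "enc p \<in> {0,1}" "enc q \<in> {0,1}"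
      using \<open>p \<noteq> c\<close> \<open>q \<noteq> c\<close> by (cases p; simp; cases q; simp)+
    ultimately have "l1 = [2,1,2,0]" "r1 = [2,0,2,1]" "l2 = [2,0,enc p,enc q]" "r2 = [2,0,2,enc q]"
      "y1 = [enc p, enc q] @ y2" "k = 2" "enc p \<in> {0,1}" "enc q \<in> {0,1}"
      using assms(4) enc by simp_all
    then show ?thesis by blast
  qed (use assms(4) enc in simp)
qed

lemma Rn_peak_cases:
  assumes eq: "x1 @ l1 @ y1 = x2 @ l2 @ y2" and le: "length x1 \<le> length x2"
    and R: "(l1, r1) \<in> Rn" "(l2, r2) \<in> Rn"
  shows "(x1 = x2 \<and> l1 = l2 \<and> r1 = r2 \<and> y1 = y2) \<or> (\<exists>m. x2 = x1 @ l1 @ m \<and> y1 = m @ l2 @ y2) \<or>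
    (\<exists>p\<in>{0,1}. \<exists>q\<in>{0,1}. l1 = [2,1,2,0] \<and> r1 = [2,0,2,1] \<and> l2 = [2,0,p,q] \<and> r2 = [2,0,2,q] \<and>
       x2 = x1 @ [2,1] \<and> y1 = [p,q] @ y2)"
  using append_eq_redex_cases[OF eq le]
proof (elim disjE exE conjE)
  fix k assume k: "k < length l1" "x2 = x1 @ take k l1" "drop k l1 @ y1 = l2 @ y2"
  have "length l1 = 4" using R unfolding Rn_explicit by auto
  with Rn_overlap[OF _ R k(3)] k(1) have "(k = 0 \<and> l1 = l2 \<and> r1 = r2 \<and> y1 = y2) \<or>
    (k = 2 \<and> (\<exists>p\<in>{0,1}. \<exists>q\<in>{0,1}. l1 = [2,1,2,0] \<and> r1 = [2,0,2,1] \<and>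
       l2 = [2,0,p,q] \<and> r2 = [2,0,2,q] \<and> y1 = [p,q] @ y2))" by simp
  then show ?thesis
  proof (elim disjE conjE bexE)
    fix p q assume "k = 2" "p \<in> {0,1}" "q \<in> {0,1}" "l1 = [2,1,2,0]" "r1 = [2,0,2,1]"
      "l2 = [2,0,p,q]" "r2 = [2,0,2,q]" "y1 = [p,q] @ y2"
    moreover have "x2 = x1 @ [2,1]" using k(2) \<open>k = 2\<close> \<open>l1 = [2,1,2,0]\<close> by simp
    ultimately show ?thesis by blast
  qed (use k(2) in simp)
qed blast

definition rule_cbca :: "nat list \<times> nat list" where
  "rule_cbca = ([2,1,2,0], [2,0,2,1])"

definition crit_word :: "nat \<Rightarrow> nat \<Rightarrow> nat list" where
  "crit_word p q = [2,1,2,0,p,q]"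

text \<open>The two sides of the critical peak in [c,b,c,a,p,q], each continued to the normal form
  c a c b c q, respectively c a c a c b when q = a.\<close>

definition crit_left :: "nat \<Rightarrow> nat \<Rightarrow> nat edge list" where
  "crit_left p q = ([], rule_cbca, True, [p,q]) # ([2,0], ([2,1,p,q], [2,1,2,q]), True, []) #
     (if q = 0 then [([2,0], rule_cbca, True, [])] else [])"

definition crit_right :: "nat \<Rightarrow> nat \<Rightarrow> nat edge list" where
  "crit_right p q = ([2,1], ([2,0,p,q], [2,0,2,q]), True, []) # ([], rule_cbca, True, [2,q]) #
     (if q = 0 then [([2,0], rule_cbca, True, [])] else [])"

definition homotopy_base :: "(nat dpath \<times> nat dpath) set" where
  "homotopy_base = (\<lambda>(p, q). ((crit_word p q, crit_left p q), (crit_word p q, crit_right p q)))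
     ` ({0,1} \<times> {0,1})"

lemma crit_paths:
  assumes "p \<in> {0,1}" "q \<in> {0,1}"
  shows "(crit_word p q, crit_left p q) \<in> dpaths Xn Rn" "(crit_word p q, crit_right p q) \<in> dpaths Xn Rn"
    "list_all positive (crit_left p q)" "list_all positive (crit_right p q)"
    "ptgt (crit_word p q) (crit_left p q) = ptgt (crit_word p q) (crit_right p q)"
  using assms
  by (auto simp: crit_word_def crit_left_def crit_right_def rule_cbca_def dpaths_def dedges_def
      Rn_explicit Xn_def)

lemma homotopy_base_parallel:
  "\<forall>(p, q) \<in> homotopy_base. p \<in> dpaths Xn Rn \<and> q \<in> dpaths Xn Rn \<and> parallel p q"
  unfolding homotopy_base_def using crit_paths by (auto simp: parallel_def pstart_def pend_def)

lemma Rn_critical_peak_resolved: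
  assumes "p \<in> {0,1}" "q \<in> {0,1}" "x \<in> lists Xn" "y \<in> lists Xn"
  shows "peak_resolved Xn Rn homotopy_base (x, rule_cbca, True, [p,q] @ y)
    (x @ [2,1], ([2,0,p,q], [2,0,2,q]), True, y)"
proof -
  have "((crit_word p q, crit_left p q), (crit_word p q, crit_right p q)) \<in> homotopy_base"
    using assms(1,2) unfolding homotopy_base_def by force
  from peak_resolved_base_ctx[OF Rn_lists this[unfolded crit_left_def crit_right_def]
      crit_paths(1-5)[OF assms(1,2), unfolded crit_left_def crit_right_def] assms(3,4)]
  show ?thesis by simp
qed

lemma Rn_peak_resolved:
  assumes "x1 @ l1 @ y1 = x2 @ l2 @ y2" "length x1 \<le> length x2" "(l1, r1) \<in> Rn" "(l2, r2) \<in> Rn"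
    and "x1 \<in> lists Xn" "y1 \<in> lists Xn" "x2 \<in> lists Xn" "y2 \<in> lists Xn"
  shows "peak_resolved Xn Rn homotopy_base (x1, (l1, r1), True, y1) (x2, (l2, r2), True, y2)"
  using Rn_peak_cases[OF assms(1-4)]
proof (elim disjE exE bexE conjE)
  fix m assume m: "x2 = x1 @ l1 @ m" "y1 = m @ l2 @ y2"
  then show ?thesis
    using peak_resolved_disjoint[OF Rn_lists assms(3,4)] assms(5,7,8) by simp
next
  fix p q assume "p \<in> {0,1}" "q \<in> {0,1}" "l1 = [2,1,2,0]" "r1 = [2,0,2,1]" "l2 = [2,0,p,q]"
    "r2 = [2,0,2,q]" "x2 = x1 @ [2,1]" "y1 = [p,q] @ y2"
  then show ?thesis
    using Rn_critical_peak_resolved assms(5,8) by (simp add: rule_cbca_def)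
qed (use peak_resolved_refl[OF Rn_lists] assms in \<open>auto simp: dedges_def\<close>)

lemma Rn_resolves_local_peaks: "resolves_local_peaks Xn Rn homotopy_base"
  unfolding resolves_local_peaks_def
proof (intro allI impI)
  fix e1 e2 assume e: "e1 \<in> dedges Xn Rn" "e2 \<in> dedges Xn Rn" "positive e1" "positive e2"
    "esrc e1 = esrc e2"
  obtain x1 l1 r1 y1 x2 l2 r2 y2 where e12: "e1 = (x1, (l1, r1), True, y1)" "e2 = (x2, (l2, r2), True, y2)"
    using e(3,4) by (cases e1, cases e2) auto
  then have "(l1, r1) \<in> Rn" "(l2, r2) \<in> Rn" "x1 \<in> lists Xn" "y1 \<in> lists Xn" "x2 \<in> lists Xn"
    "y2 \<in> lists Xn" "x1 @ l1 @ y1 = x2 @ l2 @ y2"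
    using e by (auto simp: dedges_def)
  then show "peak_resolved Xn Rn homotopy_base e1 e2"
    using Rn_peak_resolved[of x1 l1 y1 x2 l2 y2 r1 r2] Rn_peak_resolved[of x2 l2 y2 x1 l1 y1 r2 r1]
      peak_resolved_sym[OF e(5)] peak_resolved_sym[OF e(5)[symmetric]] e12
    by (cases "length x1 \<le> length x2") auto
qed

lemma Rn_critical_pair_joinable:
  assumes "p \<in> {0,1}" "q \<in> {0,1}"
  shows "\<exists>z. ([2,0,2,1,p,q], z) \<in> (rstep Rn)\<^sup>* \<and> ([2,1,2,0,2,q], z) \<in> (rstep Rn)\<^sup>*"
proof -
  obtain l r where l: "crit_left p q = ([], rule_cbca, True, [p,q]) # l"
    and r: "crit_right p q = ([2,1], ([2,0,p,q], [2,0,2,q]), True, []) # r"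
    by (simp add: crit_left_def crit_right_def)
  have "([2,0,2,1,p,q], l) \<in> dpaths Xn Rn" "list_all positive l"
    "([2,1,2,0,2,q], r) \<in> dpaths Xn Rn" "list_all positive r"
    using crit_paths(1-4)[OF assms] l r
    by (simp_all add: dpaths_Cons[OF Rn_lists] crit_word_def rule_cbca_def)
  moreover have "ptgt [2,0,2,1,p,q] l = ptgt [2,1,2,0,2,q] r"
    using crit_paths(5)[OF assms] l r by (simp add: crit_word_def rule_cbca_def)
  ultimately show ?thesis by (metis positive_path_rtrancl)
qed

lemma Rn_local_confluence:
  assumes "(u, v) \<in> rstep Rn" "(u, w) \<in> rstep Rn"
  shows "\<exists>z. (v, z) \<in> (rstep Rn)\<^sup>* \<and> (w, z) \<in> (rstep Rn)\<^sup>*"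
proof -
  have ordered: "\<exists>z. (x1 @ r1 @ y1, z) \<in> (rstep Rn)\<^sup>* \<and> (x2 @ r2 @ y2, z) \<in> (rstep Rn)\<^sup>*"
    if "x1 @ l1 @ y1 = x2 @ l2 @ y2" "length x1 \<le> length x2" "(l1, r1) \<in> Rn" "(l2, r2) \<in> Rn"
    for x1 l1 r1 y1 x2 l2 r2 y2
    using Rn_peak_cases[OF that]
  proof (elim disjE exE bexE conjE)
    fix m assume "x2 = x1 @ l1 @ m" "y1 = m @ l2 @ y2"
    then have "(x1 @ r1 @ y1, x1 @ r1 @ m @ r2 @ y2) \<in> rstep Rn"
      "(x2 @ r2 @ y2, x1 @ r1 @ m @ r2 @ y2) \<in> rstep Rn"
      using rstepI[OF that(4), of "x1 @ r1 @ m" y2] rstepI[OF that(3), of x1 "m @ r2 @ y2"] by simp_all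
    then show ?thesis by blast
  next
    fix p q assume pq: "p \<in> {0,1}" "q \<in> {0,1}" "r1 = [2,0,2,1]" "r2 = [2,0,2,q]"
      "x2 = x1 @ [2,1]" "y1 = [p,q] @ y2"
    obtain z where "([2,0,2,1,p,q], z) \<in> (rstep Rn)\<^sup>*" "([2,1,2,0,2,q], z) \<in> (rstep Rn)\<^sup>*"
      using Rn_critical_pair_joinable[OF pq(1,2)] by blast
    from this[THEN rtrancl_rstep_ctx[where u = x1 and v = y2]] show ?thesis
      using pq by auto
  qed auto
  obtain x1 l1 r1 y1 x2 l2 r2 y2 where "u = x1 @ l1 @ y1" "v = x1 @ r1 @ y1" "(l1, r1) \<in> Rn"
    "u = x2 @ l2 @ y2" "w = x2 @ r2 @ y2" "(l2, r2) \<in> Rn"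
    using assms by (metis rstepE)
  then show ?thesis
    using ordered[of x1 l1 y1 x2 l2 y2 r1 r2] ordered[of x2 l2 y2 x1 l1 y1 r2 r1]
    by (cases "length x1 \<le> length x2") auto
qed

lemma confluent_Rn: "confluent Rn"
  using newman[OF noetherian_Rn Rn_local_confluence] .

lemma complete_R0: "complete_srs R0"
  unfolding complete_srs_def
  using noetherian_R0 confluent_map[OF enc_R0 dec_Rn dec_enc confluent_Rn] by blast

lemma fin_pres_Rn: "fin_pres Xn Rn"
  unfolding fin_pres_def using Rn_lists by (simp add: Xn_def Rn_def R0_def)

lemma ev_singleton: "ev (\<lambda>x. [f x]) u = map f u"
  by (induction u) simp_all

lemma presents_Rn: "presents_same Xn Rn (UNIV :: letter set) R0"
  unfolding presents_same_def
proof (intro exI[of _ "\<lambda>y. [dec y]"] exI[of _ "\<lambda>z. [enc z]"] conjI ballI)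
  fix u v assume uv: "u \<in> lists Xn" "v \<in> lists Xn"
  have "map enc (map dec u) = u" "map enc (map dec v) = v"
    using uv by (auto simp: enc_dec intro!: map_idI)
  then show "(u, v) \<in> congr Rn \<longleftrightarrow> (ev (\<lambda>y. [dec y]) u, ev (\<lambda>y. [dec y]) v) \<in> congr R0"
    unfolding ev_singleton by (metis congr_map dec_Rn enc_R0)
qed simp_all

lemma FCRS_R0: "FCRS (UNIV :: letter set) R0"
  unfolding FCRS_def complete_srs_def
  using fin_pres_Rn noetherian_Rn confluent_Rn presents_Rn by blast

lemma FDT_R0: "FDT (UNIV :: letter set) R0"
proof -
  have "finite homotopy_base" unfolding homotopy_base_def by simp
  with FDT_pres_if_resolves_local_peaks[OF Rn_lists noetherian_Rn confluent_Rn
      Rn_resolves_local_peaks _ homotopy_base_parallel]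
  show ?thesis unfolding FDT_def using fin_pres_Rn presents_Rn by blast
qed

section \<open>M is not biautomatic\<close>

text \<open>The number of letters b standing at an odd distance after the nearest c to their left.
  Every rule starts with c, has length four and preserves both this number and the parity
  state reached at its end.\<close>

datatype cpos = NoC | Odd | Even

fun cpos_step :: "cpos \<Rightarrow> letter \<Rightarrow> cpos" where
  "cpos_step s x = (if x = c then Odd else (case s of NoC \<Rightarrow> NoC | Odd \<Rightarrow> Even | Even \<Rightarrow> Odd))"

fun odd_bs :: "cpos \<Rightarrow> letter list \<Rightarrow> nat" where
  "odd_bs s [] = 0"
| "odd_bs s (x # w) = (if x = b \<and> s = Odd then 1 else 0) + odd_bs (cpos_step s x) w"

lemma odd_bs_append: "odd_bs s (u @ v) = odd_bs s u + odd_bs (foldl cpos_step s u) v"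
  by (induction u arbitrary: s) auto

lemma odd_bs_le_length: "odd_bs s w \<le> length w"
  by (induction w arbitrary: s) (simp_all add: le_SucI del: cpos_step.simps)

lemma odd_bs_prefix: "odd_bs s p \<le> odd_bs s (p @ w)" "odd_bs s (p @ w) \<le> odd_bs s p + length w"
  using odd_bs_le_length[of "foldl cpos_step s p" w] by (simp_all add: odd_bs_append)

lemma odd_bs_replicate_b: "odd_bs Even (replicate m b) = m div 2 \<and> odd_bs Odd (replicate m b) = (m + 1) div 2"
  by (induction m) auto

lemma odd_bs_no_b: "b \<notin> set w \<Longrightarrow> odd_bs s w = 0"
  by (induction w arbitrary: s) auto

lemma odd_bs_congr:
  assumes "(u, v) \<in> congr R0"
  shows "odd_bs s u = odd_bs s v"
proof -
  have rule: "odd_bs s l = odd_bs s r \<and> foldl cpos_step s l = foldl cpos_step s r" if "(l, r) \<in> R0" for s l r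
    using that unfolding R0_def by (cases s) auto
  have "odd_bs s u = odd_bs s v" if "(u, v) \<in> rstep R0" for u v
    using that by (rule rstepE) (simp add: odd_bs_append rule)
  with assms show ?thesis
    unfolding congr_def by (induction rule: rtrancl_induct) auto
qed

lemma congr_R0_no_c:
  assumes "(u, v) \<in> congr R0" and "c \<notin> set u"
  shows "v = u"
  using assms(1) by (rule congr_isolated) (use assms(2) in \<open>auto elim!: rstepE simp: R0_def\<close>)

lemma congr_R0_short:
  assumes "(u, v) \<in> congr R0" and "length u < 4"
  shows "v = u"
  using assms(1) by (rule congr_isolated) (use assms(2) R0_length in \<open>fastforce elim!: rstepE\<close>)

abbreviation cx_pow :: "letter \<Rightarrow> nat \<Rightarrow> letter list" where
  "cx_pow x n \<equiv> concat (replicate n [c, x])"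

lemma cx_pow_snoc [simp]: "cx_pow x n @ c # x # r = c # x # cx_pow x n @ r"
  by (induction n) auto

lemma pairs_to_cx_pow:
  assumes "p \<noteq> c" "x \<noteq> c"
  shows "([c, p] @ replicate (2 * n) x @ r, [c, p] @ cx_pow x n @ r) \<in> congr R0"
  using assms(1)
proof (induction n arbitrary: p)
  case (Suc n)
  have "([c, p, x, x], [c, p, c, x]) \<in> R0"
    using Suc.prems assms(2) by (cases p; cases x) (auto simp: R0_def)
  from rule_congr[OF this, of "[]" "replicate (2 * n) x @ r"]
  have "([c, p] @ replicate (2 * Suc n) x @ r, [c, p] @ [c, x] @ replicate (2 * n) x @ r) \<in> congr R0"
    by simp
  moreover have "([c, p] @ ([c, x] @ replicate (2 * n) x @ r) @ [], [c, p] @ ([c, x] @ cx_pow x n @ r) @ [])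
      \<in> congr R0"
    using congr_ctx[OF Suc.IH[OF assms(2)]] .
  ultimately show ?case by (auto intro: congr_trans)
qed simp

lemma cb_pow_ca_commute: "(cx_pow b n @ cx_pow a m, cx_pow a m @ cx_pow b n) \<in> congr R0"
proof -
  have swap: "(cx_pow b n @ [c, a], [c, a] @ cx_pow b n) \<in> congr R0" for n
  proof (induction n)
    case (Suc n)
    have "([c, b] @ (cx_pow b n @ [c, a]) @ [], [c, b] @ ([c, a] @ cx_pow b n) @ []) \<in> congr R0"
      using congr_ctx[OF Suc.IH] .
    moreover have "([] @ [c, b, c, a] @ cx_pow b n, [] @ [c, a, c, b] @ cx_pow b n) \<in> congr R0"
      by (rule rule_congr) (simp add: R0_def)
    ultimately show ?case by (auto intro: congr_trans)
  qed simp
  show ?thesis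
  proof (induction m)
    case (Suc m)
    have "([] @ (cx_pow b n @ [c, a]) @ cx_pow a m, [] @ ([c, a] @ cx_pow b n) @ cx_pow a m) \<in> congr R0"
      using congr_ctx[OF swap] .
    moreover have "([c, a] @ (cx_pow b n @ cx_pow a m) @ [], [c, a] @ (cx_pow a m @ cx_pow b n) @ [])
        \<in> congr R0"
      using congr_ctx[OF Suc.IH] .
    ultimately show ?case by (auto intro: congr_trans)
  qed simp
qed

definition word_ba :: "nat \<Rightarrow> letter list" where
  "word_ba N = a # replicate (2 * N) b @ replicate (2 * N) a"

definition word_ab :: "nat \<Rightarrow> letter list" where
  "word_ab N = a # replicate (2 * N) a @ replicate (2 * N) b"

lemma c_word_ba: "N \<ge> 1 \<Longrightarrow> (c # word_ba N, [c, a] @ cx_pow a N @ cx_pow b N) \<in> congr R0"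
proof -
  assume "N \<ge> 1"
  then obtain M where M: "N = Suc M" by (cases N) auto
  have "(c # word_ba N, [c, a] @ cx_pow b N @ replicate (2 * N) a) \<in> congr R0"
    using pairs_to_cx_pow[of a b N "replicate (2 * N) a"] by (simp add: word_ba_def)
  moreover have "(([c, a] @ cx_pow b M) @ ([c, b] @ replicate (2 * N) a) @ [],
      ([c, a] @ cx_pow b M) @ ([c, b] @ cx_pow a N) @ []) \<in> congr R0"
    using congr_ctx[OF pairs_to_cx_pow[of b a N "[]"], of "[c, a] @ cx_pow b M" "[]"] by simp
  moreover have "([c, a] @ (cx_pow b N @ cx_pow a N) @ [], [c, a] @ (cx_pow a N @ cx_pow b N) @ [])
      \<in> congr R0"
    using congr_ctx[OF cb_pow_ca_commute] .
  ultimately show ?thesis unfolding M by (auto intro: congr_trans)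
qed

lemma c_word_ab: "(c # word_ab N, [c, a] @ cx_pow a N @ cx_pow b N) \<in> congr R0"
proof -
  have "(c # word_ab N, [c, a] @ cx_pow a N @ replicate (2 * N) b) \<in> congr R0"
    using pairs_to_cx_pow[of a a N "replicate (2 * N) b"] by (simp add: word_ab_def)
  moreover have "(cx_pow a N @ ([c, a] @ replicate (2 * N) b) @ [], cx_pow a N @ ([c, a] @ cx_pow b N) @ [])
      \<in> congr R0"
    using congr_ctx[OF pairs_to_cx_pow[of a b N "[]"], of "cx_pow a N" "[]"] by simp
  ultimately show ?thesis by (auto intro: congr_trans)
qed

lemma odd_bs_c_word_ba:
  "1 \<le> g \<Longrightarrow> g \<le> 2 * N + 1 \<Longrightarrow> odd_bs NoC (c # take g (word_ba N)) = (g - 1) div 2"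
  using odd_bs_replicate_b[of "g - 1"] by (cases g) (auto simp: word_ba_def)

lemma odd_bs_c_word_ab: "g \<le> 2 * N + 1 \<Longrightarrow> odd_bs NoC (c # take g (word_ab N)) = 0"
  by (cases g) (auto simp: word_ab_def odd_bs_no_b)

text \<open>The b's of word_ba are counted by the invariant while those of word_ab are not, so prefixes
  of representatives of c word_ba and of c word_ab that are close to a common word cannot
  both lie near the middle of these words.\<close>

lemma c_word_prefixes_apart:
  assumes V: "V1 @ W1 = V2 @ W2"
    and cg1: "([c] @ take g1 (word_ba N) @ S1, V1 @ S1') \<in> congr R0"
    and cg2: "([c] @ take g2 (word_ab N) @ S2, V2 @ S2') \<in> congr R0"
    and S: "length S1 \<le> M" "length S1' \<le> M" "length S2 \<le> M" "length S2' \<le> M"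
    and g: "g1 \<le> 2 * N + 1" "2 * N + 1 < g1 + K" "g2 \<le> 2 * N + 1" "2 * N + 1 < g2 + K"
    and N: "4 * M + 2 * K < N"
  shows False
proof -
  have len: "1 + g1 + length S1 = length V1 + length S1'" "1 + g2 + length S2 = length V2 + length S2'"
    using congr_length[OF R0_length_preserving cg1] congr_length[OF R0_length_preserving cg2] g N
    by (simp_all add: word_ba_def word_ab_def)
  have "(g1 - 1) div 2 \<le> odd_bs NoC ([c] @ take g1 (word_ba N) @ S1)"
    using odd_bs_prefix(1)[of NoC "c # take g1 (word_ba N)" S1] odd_bs_c_word_ba[of g1 N] g N by simp
  also have "\<dots> = odd_bs NoC (V1 @ S1')" by (rule odd_bs_congr[OF cg1])
  also have "\<dots> \<le> odd_bs NoC V1 + M" using odd_bs_prefix(2)[of NoC V1 S1'] S(2) by simp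
  finally have V1_bs: "(g1 - 1) div 2 \<le> odd_bs NoC V1 + M" .
  have "odd_bs NoC V2 \<le> odd_bs NoC (V2 @ S2')" by (rule odd_bs_prefix(1))
  also have "\<dots> = odd_bs NoC ([c] @ take g2 (word_ab N) @ S2)" by (rule odd_bs_congr[OF cg2, symmetric])
  also have "\<dots> \<le> M"
    using odd_bs_prefix(2)[of NoC "c # take g2 (word_ab N)" S2] odd_bs_c_word_ab[OF g(3)] S(3) by simp
  finally have V2_bs: "odd_bs NoC V2 \<le> M" .
  have "odd_bs NoC V1 \<le> odd_bs NoC V2 + (length V1 - length V2)"
  proof (cases "length V1 \<le> length V2")
    case True
    then obtain W where "V2 = V1 @ W" using V by (metis append_eq_append_conv_if append_eq_conv_conj)
    then show ?thesis using odd_bs_prefix(1)[of NoC V1 W] by simp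
  next
    case False
    then obtain W where "V1 = V2 @ W" using V by (metis append_eq_append_conv_if append_eq_conv_conj nat_le_linear)
    then show ?thesis using odd_bs_prefix(2)[of NoC V2 W] by simp
  qed
  then show False using V1_bs V2_bs len S g N by linarith
qed

lemma regular_prefix_completion:
  assumes "regular P"
  shows "\<exists>C. \<forall>s\<in>P. \<forall>i. \<exists>\<sigma>. length \<sigma> \<le> C \<and> take i s @ \<sigma> \<in> P"
proof -
  obtain Q :: "nat set" and q0 \<delta> F where Q: "finite Q" "q0 \<in> Q" "\<forall>q\<in>Q. \<forall>s. \<delta> q s \<in> Q"
    and P: "P = {w. foldl \<delta> q0 w \<in> F}"
    using assms unfolding regular_def by blast
  define len where "len q = length (SOME \<sigma>. foldl \<delta> q \<sigma> \<in> F)" for q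
  have closed: "foldl \<delta> q w \<in> Q" if "q \<in> Q" for q w
    using that Q(3) by (induction w arbitrary: q) auto
  have "\<exists>\<sigma>. length \<sigma> \<le> Max (len ` Q) \<and> take i s @ \<sigma> \<in> P" if "s \<in> P" for s i
  proof -
    let ?q = "foldl \<delta> q0 (take i s)"
    have "foldl \<delta> ?q (drop i s) \<in> F" using that P by (metis foldl_append append_take_drop_id mem_Collect_eq)
    then have "foldl \<delta> ?q (SOME \<sigma>. foldl \<delta> ?q \<sigma> \<in> F) \<in> F" by (rule someI)
    moreover have "len ?q \<le> Max (len ` Q)" using closed[OF Q(2)] Q(1) by simp
    ultimately show ?thesis unfolding P len_def by auto
  qed
  then show ?thesis by blast
qed

lemma deltaR_length: "length (deltaR u v) = max (length u) (length v)"
  by (simp add: deltaR_def Let_def)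

lemma deltaR_nth: "j < max (length u) (length v) \<Longrightarrow>
  deltaR u v ! j = (if j < length u then Some (u ! j) else None, if j < length v then Some (v ! j) else None)"
  by (auto simp: deltaR_def Let_def nth_append)

lemma deltaR_eq_take_append:
  assumes eq: "deltaR u' v' = take i (deltaR u v) @ \<sigma>" and i: "i \<le> length u"
  shows "take i u' = take i u \<and> take i v' = take i v \<and>
    length u' \<le> i + length \<sigma> \<and> length v' \<le> i + length \<sigma>"
proof -
  have lm: "max (length u') (length v') = i + length \<sigma>"
    using arg_cong[OF eq, of length] i by (simp add: deltaR_length)
  have A: "j < length u' \<and> u' ! j = u ! j \<and> (j < length v' \<longleftrightarrow> j < length v) \<and>
      (j < length v \<longrightarrow> v' ! j = v ! j)" if j: "j < i" for j
  proof -
    have "deltaR u' v' ! j = deltaR u v ! j" using eq j i by (simp add: nth_append deltaR_length)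
    then show ?thesis using deltaR_nth[of j u' v'] deltaR_nth[of j u v] lm j i
      by (auto split: if_splits)
  qed
  have "i \<le> length u'" using A[of "i - 1"] by (cases i) auto
  then have "take i u' = take i u" using A i by (intro nth_equalityI) auto
  moreover have "take i v' = take i v"
  proof (intro nth_equalityI)
    have "length v' < i \<longrightarrow> length v \<le> length v'" "length v < i \<longrightarrow> length v' \<le> length v"
      using A[of "length v'"] A[of "length v"] by auto
    then show "length (take i v') = length (take i v)" by (auto simp: min_def)
  qed (use A in auto)
  ultimately show ?thesis using lm by (metis max.cobounded1 max.cobounded2)
qed

lemma ev_length_le:
  "u \<in> lists B \<Longrightarrow> \<forall>h\<in>B. length (f h) \<le> K \<Longrightarrow> length (ev f u) \<le> K * length u"
  by (induction u) (auto simp: add_mono)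

lemma ev_prefix_window:
  assumes "u \<in> lists B" "\<forall>h\<in>B. length (f h) \<le> K" "K \<ge> 1" "T \<le> length (ev f u)"
  shows "\<exists>i\<le>length u. length (ev f (take i u)) \<le> T \<and> T < length (ev f (take i u)) + K"
  using assms
proof (induction u rule: rev_induct)
  case (snoc h u)
  show ?case
  proof (cases "T \<le> length (ev f u)")
    case True
    then obtain i where "i \<le> length u" "length (ev f (take i u)) \<le> T" "T < length (ev f (take i u)) + K"
      using snoc by auto
    then show ?thesis by (intro exI[of _ i]) auto
  next
    case False
    have "length (f h) \<le> K" using snoc.prems by auto
    show ?thesis
    proof (cases "T = length (ev f (u @ [h]))")
      case True
      then show ?thesis using snoc.prems(3) by (intro exI[of _ "length (u @ [h])"]) auto
    next
      case False
      with \<open>\<not> T \<le> length (ev f u)\<close> \<open>length (f h) \<le> K\<close> snoc.prems(4) show ?thesis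
        by (intro exI[of _ "length u"]) auto
    qed
  qed
qed simp

lemma Lleft_fellow_traveller:
  assumes comp: "\<forall>s\<in>P. \<forall>i. \<exists>\<sigma>. length \<sigma> \<le> C \<and> take i s @ \<sigma> \<in> P"
    and P: "P = (\<lambda>(u, v). deltaR u v) ` Lleft S \<phi> L (Some e)"
    and B: "L \<subseteq> lists B" "\<forall>h\<in>B. length (\<phi> h) \<le> K"
    and uv: "(u, v) \<in> Lleft S \<phi> L (Some e)" and i: "i \<le> length u"
  shows "\<exists>S1 S2. (\<phi> e @ ev \<phi> (take i u) @ S1, ev \<phi> (take i v) @ S2) \<in> congr S \<and>
    length S1 \<le> C * K \<and> length S2 \<le> C * K"
proof -
  have "deltaR u v \<in> P" unfolding P by (rule image_eqI[OF _ uv]) simp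
  then obtain \<sigma> where \<sigma>: "length \<sigma> \<le> C" "take i (deltaR u v) @ \<sigma> \<in> P"
    using comp by blast
  from \<sigma>(2) obtain pr where "pr \<in> Lleft S \<phi> L (Some e)"
    "take i (deltaR u v) @ \<sigma> = (\<lambda>(u, v). deltaR u v) pr"
    unfolding P by (rule imageE)
  then obtain u' v' where uv': "(u', v') \<in> Lleft S \<phi> L (Some e)"
    "deltaR u' v' = take i (deltaR u v) @ \<sigma>"
    by (cases pr) auto
  note prefix = deltaR_eq_take_append[OF uv'(2) i]
  have "drop i u' \<in> lists B" "drop i v' \<in> lists B"
    using uv'(1) B(1) by (auto simp: Lleft_def dest: in_set_dropD)
  moreover have "length (drop i u') \<le> C" "length (drop i v') \<le> C"
    using prefix \<sigma>(1) by auto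
  ultimately have "length (ev \<phi> (drop i u')) \<le> K * C" "length (ev \<phi> (drop i v')) \<le> K * C"
    using ev_length_le[OF _ B(2)] by (meson le_trans mult_le_mono2)+
  moreover have "(\<phi> e @ ev \<phi> (take i u) @ ev \<phi> (drop i u'), ev \<phi> (take i v) @ ev \<phi> (drop i v'))
      \<in> congr S"
  proof -
    have "take i u @ drop i u' = u'" "take i v @ drop i v' = v'"
      using prefix by (metis append_take_drop_id)+
    then show ?thesis using uv'(1) by (simp add: Lleft_def flip: ev_append)
  qed
  ultimately show ?thesis by (auto simp: mult.commute)
qed

lemma lang_ok_generator_c:
  assumes "lang_ok (UNIV :: letter set) R0 B \<phi> L"
  shows "\<exists>e\<in>B. \<phi> e = [c]"
proof -
  obtain u where u: "u \<in> L" "(ev \<phi> u, [c]) \<in> congr R0"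
    using assms unfolding lang_ok_def by blast
  then have "concat (map \<phi> u) = [c]"
    using congr_R0_short[OF congr_sym[OF u(2)]] by (simp add: ev_def)
  then obtain e where "e \<in> set u" "\<phi> e = [c]"
    by (induction u) (auto simp: append_eq_Cons_conv)
  then show ?thesis using u(1) assms unfolding lang_ok_def by blast
qed

text \<open>Since c-free words are alone in their class, a representative of such a word x is read
  letter by letter along x, and the fellow traveller property ties its prefixes to those of a
  representative of c x.\<close>

lemma c_free_fellow_prefix:
  assumes lang: "lang_ok (UNIV :: letter set) R0 B \<phi> L" and e: "\<phi> e = [c]"
    and comp: "\<forall>s\<in>(\<lambda>(u, v). deltaR u v) ` Lleft R0 \<phi> L (Some e). \<forall>i. \<exists>\<sigma>. length \<sigma> \<le> C \<and>
      take i s @ \<sigma> \<in> (\<lambda>(u, v). deltaR u v) ` Lleft R0 \<phi> L (Some e)"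
    and K: "\<forall>h\<in>B. length (\<phi> h) \<le> K" "K \<ge> 1"
    and x: "c \<notin> set x" "T \<le> length x" and v: "v \<in> L" "(c # x, ev \<phi> v) \<in> congr R0"
  shows "\<exists>g V W S1 S2. g \<le> T \<and> T < g + K \<and> V @ W = ev \<phi> v \<and>
    ([c] @ take g x @ S1, V @ S2) \<in> congr R0 \<and> length S1 \<le> C * K \<and> length S2 \<le> C * K"
proof -
  obtain u where u: "u \<in> L" "(ev \<phi> u, x) \<in> congr R0"
    using lang unfolding lang_ok_def by blast
  have ux: "ev \<phi> u = x" using congr_R0_no_c[OF congr_sym[OF u(2)] x(1)] .
  have uB: "u \<in> lists B" "L \<subseteq> lists B" using u(1) lang unfolding lang_ok_def by auto
  have uv: "(u, v) \<in> Lleft R0 \<phi> L (Some e)"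
    using u(1) v ux e by (simp add: Lleft_def)
  obtain i where i: "i \<le> length u" "length (ev \<phi> (take i u)) \<le> T" "T < length (ev \<phi> (take i u)) + K"
    using ev_prefix_window[OF uB(1) K] x(2) ux by auto
  obtain S1 S2 where S: "(\<phi> e @ ev \<phi> (take i u) @ S1, ev \<phi> (take i v) @ S2) \<in> congr R0"
      "length S1 \<le> C * K" "length S2 \<le> C * K"
    using Lleft_fellow_traveller[OF comp HOL.refl uB(2) K(1) uv i(1)] by blast
  have "x = ev \<phi> (take i u) @ ev \<phi> (drop i u)" using ux by (simp flip: ev_append)
  then have "take (length (ev \<phi> (take i u))) x = ev \<phi> (take i u)" by simp
  moreover have "ev \<phi> (take i v) @ ev \<phi> (drop i v) = ev \<phi> v"
    by (simp flip: ev_append)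
  ultimately show ?thesis using i S e
    by (intro exI[of _ "length (ev \<phi> (take i u))"] exI[of _ "ev \<phi> (take i v)"]
        exI[of _ "ev \<phi> (drop i v)"] exI[of _ S1] exI[of _ S2]) simp
qed

theorem not_biautomatic: "\<not> biautomatic (UNIV :: letter set) R0"
proof
  assume "biautomatic (UNIV :: letter set) R0"
  then obtain B \<phi> L where lang: "lang_ok (UNIV :: letter set) R0 B \<phi> L"
    and reg: "\<forall>g \<in> insert None (Some ` B). regular ((\<lambda>(u, v). deltaR u v) ` Lleft R0 \<phi> L g)"
    unfolding biautomatic_def by blast
  obtain e where e: "e \<in> B" "\<phi> e = [c]" using lang_ok_generator_c[OF lang] by blast
  obtain C where comp: "\<forall>s\<in>(\<lambda>(u, v). deltaR u v) ` Lleft R0 \<phi> L (Some e). \<forall>i. \<exists>\<sigma>. length \<sigma> \<le> C \<and>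
      take i s @ \<sigma> \<in> (\<lambda>(u, v). deltaR u v) ` Lleft R0 \<phi> L (Some e)"
    using regular_prefix_completion reg e(1) by blast
  define K where "K = Max ((\<lambda>h. length (\<phi> h)) ` B)"
  have K: "\<forall>h\<in>B. length (\<phi> h) \<le> K"
    using lang unfolding K_def lang_ok_def by simp
  with e have "K \<ge> 1" by force
  define N where "N = 4 * (C * K) + 2 * K + 1"
  obtain v where v: "v \<in> L" "(c # word_ba N, ev \<phi> v) \<in> congr R0"
    using lang unfolding lang_ok_def by (metis congr_sym UNIV_I lists_UNIV)
  have "(c # word_ab N, ev \<phi> v) \<in> congr R0"
    using c_word_ab c_word_ba[of N] v(2) N_def by (meson congr_sym congr_trans le_add2)
  note fellow = c_free_fellow_prefix[OF lang e(2) comp K \<open>K \<ge> 1\<close> _ _ v(1), where T = "2 * N + 1"]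
  obtain g1 V1 W1 S1 S1' where 1: "g1 \<le> 2 * N + 1" "2 * N + 1 < g1 + K" "V1 @ W1 = ev \<phi> v"
      "([c] @ take g1 (word_ba N) @ S1, V1 @ S1') \<in> congr R0" "length S1 \<le> C * K" "length S1' \<le> C * K"
    using fellow[OF _ _ v(2)] by (auto simp: word_ba_def)
  obtain g2 V2 W2 S2 S2' where 2: "g2 \<le> 2 * N + 1" "2 * N + 1 < g2 + K" "V2 @ W2 = ev \<phi> v"
      "([c] @ take g2 (word_ab N) @ S2, V2 @ S2') \<in> congr R0" "length S2 \<le> C * K" "length S2' \<le> C * K"
    using fellow[OF _ _ \<open>(c # word_ab N, ev \<phi> v) \<in> congr R0\<close>] by (auto simp: word_ab_def)
  have "V1 @ W1 = V2 @ W2" using 1(3) 2(3) by simp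
  then show False
    using c_word_prefixes_apart[OF _ 1(4) 2(4) 1(5,6) 2(5,6) 1(1,2) 2(1,2)] N_def by simp
qed

section \<open>M is automatic\<close>

definition lhs_R0 :: "letter list set" where
  "lhs_R0 = fst ` R0"

lemma lhs_R0_explicit: "lhs_R0 = {[c,b,a,b], [c,b,b,b], [c,b,c,a], [c,b,a,a], [c,b,b,a],
    [c,a,a,b], [c,a,b,b], [c,a,a,a], [c,a,b,a]}"
  unfolding lhs_R0_def R0_def by simp

lemma irreducible_R0_iff: "irreducible R0 w \<longleftrightarrow> \<not> (\<exists>x l y. w = x @ l @ y \<and> l \<in> lhs_R0)"
proof -
  have lhs: "l \<in> lhs_R0 \<longleftrightarrow> (\<exists>r. (l, r) \<in> R0)" for l unfolding lhs_R0_def by force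
  show ?thesis
  proof
    assume "irreducible R0 w"
    then show "\<not> (\<exists>x l y. w = x @ l @ y \<and> l \<in> lhs_R0)"
      unfolding irreducible_def lhs by (metis rstepI)
  next
    assume "\<not> (\<exists>x l y. w = x @ l @ y \<and> l \<in> lhs_R0)"
    then show "irreducible R0 w"
      unfolding irreducible_def lhs by (metis rstepE)
  qed
qed

lemma irreducible_R0_prefix: "irreducible R0 (p @ q) \<Longrightarrow> irreducible R0 p"
  unfolding irreducible_R0_iff by (metis append.assoc)

lemma irreducible_R0_Nil [simp]: "irreducible R0 []"
  unfolding irreducible_R0_iff lhs_R0_explicit by auto

definition last3 :: "'x list \<Rightarrow> 'x list" where
  "last3 w = drop (length w - 3) w"

lemma last3_length: "length (last3 w) \<le> 3"
  by (simp add: last3_def)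

lemma last3_snoc: "last3 (last3 p @ [x]) = last3 (p @ [x])"
proof (cases "length p \<le> 3")
  case False
  then have "Suc (length p - 3) = length p - 2" by arith
  then show ?thesis using False by (simp add: last3_def)
qed (simp add: last3_def)

lemma last3_suffix: "last3 w = L0 @ X \<Longrightarrow> \<exists>w0. w = w0 @ X"
  by (metis append.assoc append_take_drop_id last3_def)

lemma last3_snoc_suffix: "\<exists>L0. last3 (p @ [x]) = L0 @ [x]"
  unfolding last3_def by (cases "length p \<le> 2") (auto simp: drop_append)

lemma last3_snoc2_suffix: "\<exists>L0. last3 (p @ [x, y]) = L0 @ [x, y]"
  unfolding last3_def by (cases "length p \<le> 1") (auto simp: drop_append)

text \<open>All left-hand sides have length four, so irreducibility can be checked with a window of
  the last three letters.\<close>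

lemma irreducible_R0_snoc:
  "irreducible R0 (p @ [x]) \<longleftrightarrow> irreducible R0 p \<and> last3 p @ [x] \<notin> lhs_R0"
proof
  assume H: "irreducible R0 (p @ [x])"
  have "last3 p @ [x] \<notin> lhs_R0"
  proof
    assume "last3 p @ [x] \<in> lhs_R0"
    moreover have "p @ [x] = take (length p - 3) p @ (last3 p @ [x]) @ []"
      by (simp add: last3_def)
    ultimately show False using H unfolding irreducible_R0_iff by blast
  qed
  with H show "irreducible R0 p \<and> last3 p @ [x] \<notin> lhs_R0"
    using irreducible_R0_prefix by blast
next
  assume H: "irreducible R0 p \<and> last3 p @ [x] \<notin> lhs_R0"
  show "irreducible R0 (p @ [x])" unfolding irreducible_R0_iff
  proof
    assume "\<exists>X l Y. p @ [x] = X @ l @ Y \<and> l \<in> lhs_R0"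
    then obtain X l Y where XY: "p @ [x] = X @ l @ Y" "l \<in> lhs_R0" by blast
    have l4: "length l = 4" using XY(2) unfolding lhs_R0_explicit by auto
    show False
    proof (cases Y rule: rev_cases)
      case Nil
      then have eq: "X @ l = p @ [x]" using XY by simp
      have "length X + length l = length p + 1" using arg_cong[OF eq, of length] by simp
      with l4 have "length X = length p - 3" by simp
      moreover have "l = drop (length X) (p @ [x])" using arg_cong[OF eq, of "drop (length X)"] by simp
      ultimately have "l = last3 p @ [x]" by (simp add: last3_def)
      then show False using H XY(2) by simp
    next
      case (snoc Y' y)
      then have "p = X @ l @ Y'" using XY by simp
      then show False using H XY(2) unfolding irreducible_R0_iff by blast
    qed
  qed
qed

lemma irreducible_R0_snoc_c: "irreducible R0 p \<Longrightarrow> irreducible R0 (p @ [c])"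
  using irreducible_R0_snoc[of p c] unfolding lhs_R0_explicit by auto

lemma irreducible_R0_snoc_cb: "irreducible R0 p \<Longrightarrow> irreducible R0 (p @ [c, b])"
  using irreducible_R0_snoc[of "p @ [c]" b] irreducible_R0_snoc_c last3_snoc_suffix[of p c]
  unfolding lhs_R0_explicit by auto

definition ends_cb :: "letter list \<Rightarrow> bool" where
  "ends_cb p \<longleftrightarrow> (\<exists>q. p = q @ [c, b])"

lemma irreducible_R0_snoc_ca: "irreducible R0 p \<Longrightarrow> \<not> ends_cb p \<Longrightarrow> irreducible R0 (p @ [c, a])"
proof -
  assume p: "irreducible R0 p" and ne: "\<not> ends_cb p"
  have "last3 (p @ [c]) @ [a] \<notin> lhs_R0"
  proof
    assume "last3 (p @ [c]) @ [a] \<in> lhs_R0"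
    then have "last3 (p @ [c]) = [c, b, c]"
      using last3_snoc_suffix[of p c] unfolding lhs_R0_explicit by auto
    then obtain q where "p @ [c] = q @ [c, b, c]" using last3_suffix[of "p @ [c]" "[]"] by auto
    then show False using ne unfolding ends_cb_def by auto
  qed
  then show ?thesis
    using irreducible_R0_snoc[of "p @ [c]" a] irreducible_R0_snoc_c[OF p] by simp
qed

lemma irreducible_R0_append_cb_pow: "irreducible R0 p \<Longrightarrow> irreducible R0 (p @ cx_pow b k)"
proof (induction k)
  case (Suc k)
  then have "irreducible R0 ((p @ cx_pow b k) @ [c, b])" by (blast intro: irreducible_R0_snoc_cb)
  then show ?case by simp
qed simp

lemma irreducible_R0_after_c: "irreducible R0 (p @ [c, z]) \<Longrightarrow> irreducible R0 (p @ [c, z, y])"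
  using irreducible_R0_snoc[of "p @ [c, z]" y] last3_snoc2_suffix[of p c z]
  unfolding lhs_R0_explicit by auto

lemma ends_cb_decomp: "\<exists>w' k. w = w' @ cx_pow b k \<and> \<not> ends_cb w'"
proof (induction "length w" arbitrary: w rule: less_induct)
  case less
  show ?case
  proof (cases "ends_cb w")
    case True
    then obtain q where q: "w = q @ [c, b]" unfolding ends_cb_def by blast
    then have "length q < length w" by simp
    then obtain w' k where "q = w' @ cx_pow b k" "\<not> ends_cb w'" using less by blast
    then show ?thesis using q by (intro exI[of _ w'] exI[of _ "Suc k"]) simp
  qed (intro exI[of _ w] exI[of _ 0], simp)
qed

definition gen_word :: "letter option \<Rightarrow> letter list" where
  "gen_word g = (case g of None \<Rightarrow> [] | Some x \<Rightarrow> [x])"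

definition nf_mult :: "letter option \<Rightarrow> (letter list \<times> letter list) set" where
  "nf_mult g = {(u, v). irreducible R0 u \<and> irreducible R0 v \<and> (u @ gen_word g, v) \<in> congr R0}"

lemma confluent_R0: "confluent R0"
  using complete_R0 by (simp add: complete_srs_def)

lemma nf_mult_unique:
  assumes "(u, v) \<in> nf_mult g" "(u, v') \<in> nf_mult g"
  shows "v' = v"
proof -
  have "(v', v) \<in> congr R0" "irreducible R0 v" "irreducible R0 v'"
    using assms unfolding nf_mult_def by (auto intro: congr_trans congr_sym)
  then show ?thesis using congr_irreducible_eq[OF confluent_R0] by blast
qed

inductive_set right_mult :: "letter \<Rightarrow> (letter list \<times> letter list) set" for z where
  free: "irreducible R0 (u @ [z]) \<Longrightarrow> (u, u @ [z]) \<in> right_mult z"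
| after_c: "irreducible R0 (w @ [c, p]) \<Longrightarrow> p \<noteq> c \<Longrightarrow> y \<noteq> c \<Longrightarrow> z = b \<Longrightarrow>
    (w @ [c, p, y], w @ [c, p, c, b]) \<in> right_mult z"
| after_ca: "irreducible R0 (w @ [c, a]) \<Longrightarrow> y \<noteq> c \<Longrightarrow> z = a \<Longrightarrow>
    (w @ [c, a, y], w @ [c, a, c, a]) \<in> right_mult z"
| cascade: "irreducible R0 w \<Longrightarrow> \<not> ends_cb w \<Longrightarrow> z = a \<Longrightarrow>
    (w @ cx_pow b k @ [c, b, y], w @ [c, a] @ cx_pow b (Suc k)) \<in> right_mult z"

lemma cascade_congr: "(w @ cx_pow b k @ [c, b, y, a], w @ [c, a] @ cx_pow b (Suc k)) \<in> congr R0"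
proof -
  have "([c, b, y, a], [c, b, c, a]) \<in> congr R0"
    using rule_congr[of "[c, b, y, a]" "[c, b, c, a]" R0 "[]" "[]"] by (cases y) (auto simp: R0_def)
  moreover have "([c, b, c, a], [c, a, c, b]) \<in> congr R0"
    using rule_congr[of "[c, b, c, a]" "[c, a, c, b]" R0 "[]" "[]"] by (simp add: R0_def)
  ultimately have "((w @ cx_pow b k) @ [c, b, y, a] @ [], (w @ cx_pow b k) @ [c, a, c, b] @ []) \<in> congr R0"
    by (meson congr_ctx congr_trans)
  moreover have "(w @ (cx_pow b k @ cx_pow a 1) @ [c, b], w @ (cx_pow a 1 @ cx_pow b k) @ [c, b])
      \<in> congr R0"
    using congr_ctx[OF cb_pow_ca_commute] .
  ultimately show ?thesis by (auto intro: congr_trans)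
qed

lemma right_mult_nf_mult: "(u, v) \<in> right_mult z \<Longrightarrow> (u, v) \<in> nf_mult (Some z)"
proof (induction rule: right_mult.induct)
  case (free u)
  then show ?case using irreducible_R0_prefix by (auto simp: nf_mult_def gen_word_def)
next
  case (after_c w p y)
  then have "([c, p, y, b], [c, p, c, b]) \<in> R0" by (cases p; cases y) (auto simp: R0_def)
  from rule_congr[OF this, of w "[]"] after_c show ?case
    using irreducible_R0_after_c irreducible_R0_snoc_cb[of "w @ [c, p]"]
    by (auto simp: nf_mult_def gen_word_def)
next
  case (after_ca w y)
  then have "([c, a, y, a], [c, a, c, a]) \<in> R0" by (cases y) (auto simp: R0_def)
  from rule_congr[OF this, of w "[]"] after_ca show ?case
    using irreducible_R0_after_c irreducible_R0_snoc_ca[of "w @ [c, a]"]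
    by (auto simp: nf_mult_def gen_word_def ends_cb_def)
next
  case (cascade w k y)
  have "irreducible R0 ((w @ cx_pow b k) @ [c, b])"
    by (rule irreducible_R0_snoc_cb[OF irreducible_R0_append_cb_pow[OF cascade(1)]])
  from irreducible_R0_after_c[OF this, of y] have "irreducible R0 (w @ cx_pow b k @ [c, b, y])"
    by simp
  moreover have "irreducible R0 (w @ [c, a] @ cx_pow b (Suc k))"
    using irreducible_R0_append_cb_pow[OF irreducible_R0_snoc_ca[OF cascade(1,2)], of "Suc k"] by simp
  ultimately show ?case using cascade_congr[of w k y] cascade(3) by (simp add: nf_mult_def gen_word_def)
qed

lemma lhs_R0_snoc_cases:
  assumes "last3 u @ [z] \<in> lhs_R0"
  shows "(z = b \<and> (\<exists>p y. last3 u = [c, p, y] \<and> p \<noteq> c \<and> y \<noteq> c)) \<or>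
    (z = a \<and> (\<exists>y. last3 u = [c, a, y] \<and> y \<noteq> c)) \<or> (z = a \<and> (\<exists>y. last3 u = [c, b, y]))"
proof -
  have "length (last3 u) = 3" using assms unfolding lhs_R0_explicit by auto
  then obtain x1 x2 x3 where "last3 u = [x1, x2, x3]"
    by (auto simp: numeral_3_eq_3 length_Suc_conv)
  with assms show ?thesis unfolding lhs_R0_explicit by auto
qed

lemma right_mult_exists:
  assumes "irreducible R0 u"
  shows "\<exists>v. (u, v) \<in> right_mult z"
proof (cases "irreducible R0 (u @ [z])")
  case False
  then have "last3 u @ [z] \<in> lhs_R0" using irreducible_R0_snoc assms by blast
  then consider (B) p y where "z = b" "last3 u = [c, p, y]" "p \<noteq> c" "y \<noteq> c"
    | (A) y where "z = a" "last3 u = [c, a, y]" "y \<noteq> c"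
    | (C) y where "z = a" "last3 u = [c, b, y]"
    using lhs_R0_snoc_cases by blast
  then show ?thesis
  proof cases
    case B
    then obtain w where "u = w @ [c, p, y]" using last3_suffix[of u "[]"] by auto
    then show ?thesis using B assms irreducible_R0_prefix[of "w @ [c, p]" "[y]"]
      by (auto intro: right_mult.after_c)
  next
    case A
    then obtain w where "u = w @ [c, a, y]" using last3_suffix[of u "[]"] by auto
    then show ?thesis using A assms irreducible_R0_prefix[of "w @ [c, a]" "[y]"]
      by (auto intro: right_mult.after_ca)
  next
    case C
    then obtain w1 where "u = w1 @ [c, b, y]" using last3_suffix[of u "[]"] by auto
    moreover obtain w k where "w1 = w @ cx_pow b k" "\<not> ends_cb w" using ends_cb_decomp by blast
    moreover have "irreducible R0 w" using assms calculation irreducible_R0_prefix by blast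
    ultimately show ?thesis using C right_mult.cascade[of w z k y] by auto
  qed
qed (auto intro: right_mult.free)

lemma nf_mult_Some: "nf_mult (Some z) = right_mult z"
proof (intro set_eqI iffI)
  fix p assume "p \<in> nf_mult (Some z)"
  moreover obtain u v where p: "p = (u, v)" by (cases p)
  ultimately have "irreducible R0 u" by (simp add: nf_mult_def)
  then obtain v' where "(u, v') \<in> right_mult z" using right_mult_exists by blast
  with \<open>p \<in> nf_mult (Some z)\<close> show "p \<in> right_mult z"
    using right_mult_nf_mult nf_mult_unique p by metis
qed (use right_mult_nf_mult in auto)

lemma nf_mult_None: "nf_mult None = {(u, u) | u. irreducible R0 u}"
  using congr_irreducible_eq[OF confluent_R0] by (auto simp: nf_mult_def gen_word_def)

definition diag :: "'x list \<Rightarrow> ('x option \<times> 'x option) list" where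
  "diag w = map (\<lambda>x. (Some x, Some x)) w"

lemma diag_simps [simp]: "diag [] = []" "diag (x # w) = (Some x, Some x) # diag w"
  "diag (u @ v) = diag u @ diag v"
  by (simp_all add: diag_def)

lemma deltaR_Cons [simp]: "deltaR (x # u) (y # v) = (Some x, Some y) # deltaR u v"
  by (simp add: deltaR_def Let_def)

lemma deltaR_Nil [simp]: "deltaR [] v = map (\<lambda>y. (None, Some y)) v"
  by (induction v) (simp_all add: deltaR_def Let_def)

lemma deltaR_append_same: "deltaR (p @ u) (p @ v) = diag p @ deltaR u v"
  by (induction p) simp_all

lemma deltaR_same: "deltaR u u = diag u"
  using deltaR_append_same[of u "[]" "[]"] by (simp add: deltaR_def)

text \<open>While the two words agree the automaton remembers the last three letters; the remaining
  states follow the ends of the four kinds of pairs in right_mult.\<close>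

datatype mstate = Diag "letter list" | Cascade | CascadeC | Expect letter | Accept | Dead

fun mstep :: "letter option \<Rightarrow> mstate \<Rightarrow> letter option \<times> letter option \<Rightarrow> mstate" where
  "mstep g (Diag L) (Some x, Some y) =
    (if x = y then (if L @ [x] \<in> lhs_R0 then Dead else Diag (last3 (L @ [x])))
     else if g = Some a \<and> x = b \<and> y = a \<and> (\<exists>L0. L = L0 @ [c]) \<and> L \<noteq> [c, b, c] then Cascade
     else if g = Some a \<and> x \<noteq> c \<and> y = c \<and> (\<exists>L0. L = L0 @ [c, a]) then Expect a
     else if g = Some b \<and> x \<noteq> c \<and> y = c \<and> (\<exists>L0 p. L = L0 @ [c, p] \<and> p \<noteq> c) then Expect b
     else Dead)"
| "mstep g (Diag L) (None, Some z) = (if g = Some z \<and> L @ [z] \<notin> lhs_R0 then Accept else Dead)"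
| "mstep g Cascade (Some x, Some y) = (if y = c then (if x = c then CascadeC else Expect b) else Dead)"
| "mstep g CascadeC (Some x, Some y) = (if x = b \<and> y = b then Cascade else Dead)"
| "mstep g CascadeC (None, Some y) = (if y = b then Accept else Dead)"
| "mstep g (Expect x) (None, Some y) = (if y = x then Accept else Dead)"
| "mstep g _ _ = Dead"

definition accepting :: "letter option \<Rightarrow> mstate set" where
  "accepting g = (if g = None then range Diag else {Accept})"

lemma run_Dead [simp]: "foldl (mstep g) Dead t = Dead"
  by (induction t) auto

lemma run_Accept: "foldl (mstep g) Accept t = Accept \<longleftrightarrow> t = []"
  by (cases t) auto

lemma run_Expect: "foldl (mstep g) (Expect x) t = Accept \<longleftrightarrow> t = [(None, Some x)]"
proof (cases t)
  case (Cons p t')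
  obtain o1 o2 where "p = (o1, o2)" by (cases p)
  with Cons show ?thesis by (cases o1; cases o2) (auto simp: run_Accept)
qed simp

lemma run_Cascade_Accept_shape:
  "foldl (mstep g) Cascade t = Accept \<Longrightarrow>
    \<exists>k y. t = diag (cx_pow b k) @ [(Some y, Some c), (None, Some b)]"
proof (induction "length t" arbitrary: t rule: less_induct)
  case less
  obtain o1 o2 t' where t: "t = (o1, o2) # t'" using less.prems by (cases t) auto
  consider (cc) "o1 = Some c" "o2 = Some c" | (xc) x where "o1 = Some x" "x \<noteq> c" "o2 = Some c"
    using less.prems t by (cases o1; cases o2) (auto split: if_splits)
  then show ?case
  proof cases
    case cc
    then obtain o3 o4 t'' where t': "t' = (o3, o4) # t''"
      using less.prems t by (cases t') auto
    show ?thesis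
    proof (cases "o3 = Some b \<and> o4 = Some b")
      case True
      then obtain k y where "t'' = diag (cx_pow b k) @ [(Some y, Some c), (None, Some b)]"
        using less.hyps[of t''] less.prems t t' cc by auto
      then show ?thesis using t t' cc True by (intro exI[of _ "Suc k"] exI[of _ y]) simp
    next
      case False
      then have "o3 = None" "o4 = Some b" "t'' = []"
        using less.prems t t' cc by (cases o3; cases o4; auto simp: run_Accept split: if_splits)+
      then show ?thesis using t t' cc by (intro exI[of _ 0] exI[of _ c]) simp
    qed
  next
    case xc
    then show ?thesis using less.prems t run_Expect by (intro exI[of _ 0] exI[of _ x]) auto
  qed
qed

lemma run_Cascade:
  "foldl (mstep g) Cascade t = Accept \<longleftrightarrow>
    (\<exists>k y. t = diag (cx_pow b k) @ [(Some y, Some c), (None, Some b)])"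
proof -
  have "foldl (mstep g) Cascade (diag (cx_pow b k) @ [(Some y, Some c), (None, Some b)]) = Accept" for k y
    by (induction k) auto
  then show ?thesis using run_Cascade_Accept_shape by blast
qed

lemma run_Diag:
  "irreducible R0 p \<Longrightarrow> foldl (mstep g) (Diag (last3 p)) (diag w) =
    (if irreducible R0 (p @ w) then Diag (last3 (p @ w)) else Dead)"
proof (induction w arbitrary: p)
  case (Cons x w)
  show ?case
  proof (cases "last3 p @ [x] \<in> lhs_R0")
    case True
    then have "\<not> irreducible R0 (p @ x # w)"
      using irreducible_R0_snoc irreducible_R0_prefix[of "p @ [x]" w] by auto
    then show ?thesis using True by simp
  next
    case False
    then have "irreducible R0 (p @ [x])" using irreducible_R0_snoc Cons.prems by blast
    with Cons.IH[OF this] False show ?thesis by (simp add: last3_snoc)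
  qed
qed simp

lemma run_Diag_Nil: "foldl (mstep g) (Diag []) (diag w) = (if irreducible R0 w then Diag (last3 w) else Dead)"
  using run_Diag[of "[]" g w] by (simp add: last3_def)

lemma deltaR_cascade: "deltaR (w @ cx_pow b k @ [c, b, y]) (w @ [c, a] @ cx_pow b (Suc k)) =
    diag (w @ [c]) @ (Some b, Some a) # diag (cx_pow b k) @ [(Some y, Some c), (None, Some b)]"
  using deltaR_append_same[of w] deltaR_append_same[of "cx_pow b k" "[y]" "[c, b]"] by simp

lemma right_mult_accepted:
  assumes "(u, v) \<in> right_mult z"
  shows "foldl (mstep (Some z)) (Diag []) (deltaR u v) = Accept"
  using assms
proof induction
  case (free u)
  then have "irreducible R0 u" "last3 u @ [z] \<notin> lhs_R0" using irreducible_R0_snoc by blast+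
  then show ?case using deltaR_append_same[of u "[]" "[z]"] by (simp add: run_Diag_Nil)
next
  case (after_c w p y)
  moreover obtain L0 where "last3 (w @ [c, p]) = L0 @ [c, p]" using last3_snoc2_suffix[of w c p] by blast
  ultimately show ?case
    using deltaR_append_same[of "w @ [c, p]" "[y]" "[c, b]"] run_Diag_Nil[of "Some z" "w @ [c, p]"] by auto
next
  case (after_ca w y)
  moreover obtain L0 where "last3 (w @ [c, a]) = L0 @ [c, a]" using last3_snoc2_suffix[of w c a] by blast
  ultimately show ?case
    using deltaR_append_same[of "w @ [c, a]" "[y]" "[c, a]"] run_Diag_Nil[of "Some z" "w @ [c, a]"] by auto
next
  case (cascade w k y)
  obtain L0 where L0: "last3 (w @ [c]) = L0 @ [c]" using last3_snoc_suffix[of w c] by blast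
  have "last3 (w @ [c]) \<noteq> [c, b, c]"
    using cascade(2) last3_suffix[of "w @ [c]" "[]" "[c, b, c]"] by (auto simp: ends_cb_def)
  then have "mstep (Some z) (Diag (last3 (w @ [c]))) (Some b, Some a) = Cascade"
    using L0 cascade(3) by auto
  moreover note deltaR_cascade[of w k y]
  moreover have "foldl (mstep (Some z)) (Diag []) (diag (w @ [c])) = Diag (last3 (w @ [c]))"
    using irreducible_R0_snoc_c[OF cascade(1)] by (simp only: run_Diag_Nil if_True)
  ultimately have "foldl (mstep (Some z)) (Diag []) (deltaR (w @ cx_pow b k @ [c, b, y])
      (w @ [c, a] @ cx_pow b (Suc k))) =
    foldl (mstep (Some z)) Cascade (diag (cx_pow b k) @ [(Some y, Some c), (None, Some b)])"
    by (simp only: foldl_append foldl_Cons)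
  also have "\<dots> = Accept" by (simp only: run_Cascade) blast
  finally show ?case .
qed

lemma diag_prefix_split: "\<exists>w rest. s = diag w @ rest \<and> (rest = [] \<or> (\<forall>x. hd rest \<noteq> (Some x, Some x)))"
proof (induction s)
  case (Cons p s)
  show ?case
  proof (cases "\<exists>x. p = (Some x, Some x)")
    case True
    then obtain x where "p = (Some x, Some x)" by blast
    with Cons.IH show ?thesis by (metis append_Cons diag_simps(2))
  qed (intro exI[of _ "[]"] exI[of _ "p # s"], auto)
qed (intro exI[of _ "[]"], simp)

lemma accepting_exit_cases:
  assumes "\<forall>x. p \<noteq> (Some x, Some x)" and "foldl (mstep (Some z)) (mstep (Some z) (Diag L) p) t = Accept"
  obtains (free) "p = (None, Some z)" "L @ [z] \<notin> lhs_R0" "t = []"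
  | (cascade) k y where "z = a" "p = (Some b, Some a)" "\<exists>L0. L = L0 @ [c]" "L \<noteq> [c, b, c]"
      "t = diag (cx_pow b k) @ [(Some y, Some c), (None, Some b)]"
  | (after_ca) x where "z = a" "p = (Some x, Some c)" "x \<noteq> c" "\<exists>L0. L = L0 @ [c, a]"
      "t = [(None, Some a)]"
  | (after_c) x q where "z = b" "p = (Some x, Some c)" "x \<noteq> c" "\<exists>L0. L = L0 @ [c, q]" "q \<noteq> c"
      "t = [(None, Some b)]"
proof -
  obtain o1 o2 where p: "p = (o1, o2)" by (cases p)
  consider "p = (None, Some z)" "L @ [z] \<notin> lhs_R0" "t = []"
    | "z = a" "p = (Some b, Some a)" "\<exists>L0. L = L0 @ [c]" "L \<noteq> [c, b, c]"
        "foldl (mstep (Some z)) Cascade t = Accept"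
    | x where "z = a" "p = (Some x, Some c)" "x \<noteq> c" "\<exists>L0. L = L0 @ [c, a]" "t = [(None, Some a)]"
    | x q where "z = b" "p = (Some x, Some c)" "x \<noteq> c" "\<exists>L0. L = L0 @ [c, q]" "q \<noteq> c"
        "t = [(None, Some b)]"
    using assms p by (cases o1; cases o2) (auto simp: run_Accept run_Expect split: if_splits)
  then show ?thesis
  proof cases
    case 2
    then show ?thesis using that(2) run_Cascade_Accept_shape by blast
  qed (use that in blast)+
qed

lemma accepted_step_right_mult:
  assumes irr: "irreducible R0 w" and nd: "\<forall>x. p \<noteq> (Some x, Some x)"
    and acc: "foldl (mstep (Some z)) (mstep (Some z) (Diag (last3 w)) p) t = Accept"
  shows "\<exists>u v. (u, v) \<in> right_mult z \<and> diag w @ p # t = deltaR u v"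
  using nd acc
proof (cases rule: accepting_exit_cases)
  case free
  then have "(w, w @ [z]) \<in> right_mult z" using irr irreducible_R0_snoc by (blast intro: right_mult.free)
  then show ?thesis using free deltaR_append_same[of w "[]" "[z]"]
    by (intro exI[of _ w] exI[of _ "w @ [z]"]) simp
next
  case (cascade k y)
  obtain w' where w': "w = w' @ [c]" using cascade(3) last3_suffix by blast
  have "\<not> ends_cb w'" using cascade(4) w' by (auto simp: ends_cb_def last3_def)
  then have "(w' @ cx_pow b k @ [c, b, y], w' @ [c, a] @ cx_pow b (Suc k)) \<in> right_mult z"
    using irreducible_R0_prefix irr w' cascade(1) by (blast intro: right_mult.cascade)
  moreover have "diag w @ p # t = deltaR (w' @ cx_pow b k @ [c, b, y]) (w' @ [c, a] @ cx_pow b (Suc k))"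
    using cascade(2,5) w' by (simp only: deltaR_cascade)
  ultimately show ?thesis by blast
next
  case (after_ca x)
  obtain w0 where w0: "w = w0 @ [c, a]" using after_ca(4) last3_suffix by blast
  then have "(w0 @ [c, a, x], w0 @ [c, a, c, a]) \<in> right_mult z"
    using irr after_ca by (blast intro: right_mult.after_ca)
  then show ?thesis using deltaR_append_same[of "w0 @ [c, a]" "[x]" "[c, a]"] after_ca w0
    by (intro exI[of _ "w0 @ [c, a, x]"] exI[of _ "w0 @ [c, a, c, a]"]) simp
next
  case (after_c x q)
  obtain w0 where w0: "w = w0 @ [c, q]" using after_c(4) last3_suffix by blast
  then have "(w0 @ [c, q, x], w0 @ [c, q, c, b]) \<in> right_mult z"
    using irr after_c by (blast intro: right_mult.after_c)
  then show ?thesis using deltaR_append_same[of "w0 @ [c, q]" "[x]" "[c, b]"] after_c w0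
    by (intro exI[of _ "w0 @ [c, q, x]"] exI[of _ "w0 @ [c, q, c, b]"]) simp
qed

lemma accepted_right_mult:
  assumes "foldl (mstep (Some z)) (Diag []) s = Accept"
  shows "\<exists>u v. (u, v) \<in> right_mult z \<and> s = deltaR u v"
proof -
  obtain w rest where s: "s = diag w @ rest" and rest: "rest = [] \<or> (\<forall>x. hd rest \<noteq> (Some x, Some x))"
    using diag_prefix_split by blast
  have "irreducible R0 w"
    using assms s run_Diag_Nil[of "Some z" w] by (auto split: if_splits)
  moreover from this have run: "foldl (mstep (Some z)) (Diag (last3 w)) rest = Accept"
    using assms s run_Diag_Nil[of "Some z" w] by simp
  moreover obtain p t where "rest = p # t" using run by (cases rest) auto
  ultimately show ?thesis using accepted_step_right_mult rest s by auto
qed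

lemma padded_nf_mult:
  "(\<lambda>(u, v). deltaR u v) ` nf_mult g = {s. foldl (mstep g) (Diag []) s \<in> accepting g}"
proof (cases g)
  case None
  have "s \<in> (\<lambda>(u, v). deltaR u v) ` nf_mult None" if "foldl (mstep None) (Diag []) s \<in> range Diag" for s
  proof -
    obtain w rest where s: "s = diag w @ rest" and rest: "rest = [] \<or> (\<forall>x. hd rest \<noteq> (Some x, Some x))"
      using diag_prefix_split by blast
    have "irreducible R0 w" using that s run_Diag_Nil[of None w] by (auto split: if_splits)
    moreover have "rest = []"
    proof (rule ccontr)
      assume "rest \<noteq> []"
      then obtain o1 o2 t where "rest = (o1, o2) # t" "\<forall>x. (o1, o2) \<noteq> (Some x, Some x)"
        using rest by (cases rest) auto
      then show False using that s \<open>irreducible R0 w\<close> run_Diag_Nil[of None w]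
        by (cases o1; cases o2) auto
    qed
    ultimately have "(w, w) \<in> nf_mult None" "s = deltaR w w" using s by (auto simp: nf_mult_None deltaR_same)
    then show ?thesis by (metis (no_types) case_prod_conv image_eqI)
  qed
  then show ?thesis using None
    by (auto simp: nf_mult_None accepting_def deltaR_same run_Diag_Nil)
next
  case (Some z)
  show ?thesis using right_mult_accepted accepted_right_mult
    unfolding Some nf_mult_Some accepting_def by fastforce
qed

lemma regular_automaton:
  fixes \<delta> :: "'q \<Rightarrow> 's \<Rightarrow> 'q"
  assumes "finite Q" "q0 \<in> Q" "\<forall>q\<in>Q. \<forall>s. \<delta> q s \<in> Q"
  shows "regular {w. foldl \<delta> q0 w \<in> F}"
proof -
  obtain f :: "'q \<Rightarrow> nat" and n where f: "f ` Q = {i. i < n}" "inj_on f Q"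
    using finite_imp_inj_to_nat_seg[OF assms(1)] by blast
  define \<delta>' where "\<delta>' k s = f (\<delta> (the_inv_into Q f k) s)" for k s
  have run: "foldl \<delta>' (f q) w = f (foldl \<delta> q w) \<and> foldl \<delta> q w \<in> Q" if "q \<in> Q" for q w
    using that
  proof (induction w arbitrary: q)
    case (Cons s w)
    then have "\<delta>' (f q) s = f (\<delta> q s)" "\<delta> q s \<in> Q"
      using the_inv_into_f_f[OF f(2)] assms(3) by (simp_all add: \<delta>'_def)
    with Cons.IH show ?case by simp
  qed simp
  have "{w. foldl \<delta> q0 w \<in> F} = {w. foldl \<delta>' (f q0) w \<in> f ` (F \<inter> Q)}"
  proof (intro set_eqI)
    fix w
    have "foldl \<delta>' (f q0) w = f (foldl \<delta> q0 w)" "foldl \<delta> q0 w \<in> Q" using run[OF assms(2)] by auto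
    then show "w \<in> {w. foldl \<delta> q0 w \<in> F} \<longleftrightarrow> w \<in> {w. foldl \<delta>' (f q0) w \<in> f ` (F \<inter> Q)}"
      using inj_on_image_mem_iff[OF f(2)] by auto
  qed
  moreover have "\<forall>k\<in>f ` Q. \<forall>s. \<delta>' k s \<in> f ` Q"
    using the_inv_into_f_f[OF f(2)] assms(3) by (auto simp: \<delta>'_def)
  moreover have "finite (f ` Q)" "f q0 \<in> f ` Q" "f ` (F \<inter> Q) \<subseteq> f ` Q" using assms(1,2) by auto
  ultimately show ?thesis unfolding regular_def by blast
qed

lemma regular_map:
  assumes "regular P" and "inj h"
  shows "regular (map h ` P)"
proof -
  obtain Q :: "nat set" and q0 \<delta> F where Q: "finite Q" "q0 \<in> Q" "\<forall>q\<in>Q. \<forall>s. \<delta> q s \<in> Q"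
    and P: "P = {w. foldl \<delta> q0 w \<in> F}"
    using assms(1) unfolding regular_def by blast
  define \<delta>' where "\<delta>' qo t = (case qo of None \<Rightarrow> None |
      Some q \<Rightarrow> if t \<in> range h then Some (\<delta> q (inv h t)) else None)" for qo t
  have none: "foldl \<delta>' None w = None" for w by (induction w) (auto simp: \<delta>'_def)
  have run: "foldl \<delta>' (Some q) w =
      (if set w \<subseteq> range h then Some (foldl \<delta> q (map (inv h) w)) else None)" for q w
    by (induction w arbitrary: q) (auto simp: \<delta>'_def none)
  have "map h ` P = {w. foldl \<delta>' (Some q0) w \<in> Some ` F}"
  proof (intro set_eqI iffI)
    fix w assume "w \<in> map h ` P"
    then show "w \<in> {w. foldl \<delta>' (Some q0) w \<in> Some ` F}"
      using assms(2) P run by (auto simp: inv_f_f)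
  next
    fix w assume "w \<in> {w. foldl \<delta>' (Some q0) w \<in> Some ` F}"
    then have "set w \<subseteq> range h" "map (inv h) w \<in> P" using run P by (auto split: if_splits)
    moreover from this(1) have "map h (map (inv h) w) = w" by (induction w) (auto simp: f_inv_into_f)
    ultimately show "w \<in> map h ` P" by (metis image_eqI)
  qed
  moreover have "\<forall>qo\<in>insert None (Some ` Q). \<forall>t. \<delta>' qo t \<in> insert None (Some ` Q)"
    using Q(3) by (auto simp: \<delta>'_def)
  ultimately show ?thesis
    using regular_automaton[of "insert None (Some ` Q)" "Some q0" \<delta>' "Some ` F"] Q(1,2) by simp
qed

definition mstates :: "mstate set" where
  "mstates = Diag ` {L. length L \<le> 3} \<union> range Expect \<union> {Cascade, CascadeC, Accept, Dead}"

lemma finite_mstates: "finite mstates"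
proof -
  have "(UNIV :: letter set) = {a, b, c}" by (auto intro: letter.exhaust)
  then have fin: "finite (UNIV :: letter set)" by (metis finite.emptyI finite_insert)
  then have "finite {L :: letter list. set L \<subseteq> UNIV \<and> length L \<le> 3}"
    by (intro finite_lists_length_le) simp_all
  with fin show ?thesis unfolding mstates_def by simp
qed

lemma mstep_mstates: "mstep g q p \<in> mstates"
proof -
  obtain o1 o2 where p: "p = (o1, o2)" by (cases p)
  show ?thesis unfolding p by (cases q; cases o1; cases o2) (simp_all add: mstates_def last3_length)
qed

lemma Diag_Nil_mstates: "Diag [] \<in> mstates"
  by (simp add: mstates_def)

lemma regular_padded_nf_mult: "regular ((\<lambda>(u, v). deltaR u v) ` nf_mult g)"
  unfolding padded_nf_mult
  by (rule regular_automaton[OF finite_mstates Diag_Nil_mstates]) (simp add: mstep_mstates)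

lemma regular_irreducible_R0: "regular {w. irreducible R0 w}"
proof -
  have "foldl (\<lambda>q x. mstep None q (Some x, Some x)) (Diag []) w = foldl (mstep None) (Diag []) (diag w)" for w
    by (simp add: diag_def foldl_map)
  then have "{w. irreducible R0 w} = {w. foldl (\<lambda>q x. mstep None q (Some x, Some x)) (Diag []) w \<in> range Diag}"
    by (auto simp: run_Diag_Nil)
  then show ?thesis
    by (simp only:) (rule regular_automaton[OF finite_mstates Diag_Nil_mstates], simp add: mstep_mstates)
qed

definition enc_pair :: "letter option \<times> letter option \<Rightarrow> nat option \<times> nat option" where
  "enc_pair = map_prod (map_option enc) (map_option enc)"

lemma inj_enc_pair: "inj enc_pair"
  unfolding enc_pair_def using map_prod_inj_on[OF option.inj_map[OF inj_enc] option.inj_map[OF inj_enc]]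
  by simp

lemma deltaR_map: "deltaR (map h u) (map h v) = map (map_prod (map_option h) (map_option h)) (deltaR u v)"
proof (rule nth_equalityI)
  fix j assume "j < length (deltaR (map h u) (map h v))"
  then show "deltaR (map h u) (map h v) ! j = map (map_prod (map_option h) (map_option h)) (deltaR u v) ! j"
    using deltaR_nth[of j u v] deltaR_nth[of j "map h u" "map h v"] by (simp add: deltaR_length)
qed (simp add: deltaR_length)

definition nf_codes :: "nat list set" where
  "nf_codes = map enc ` {w. irreducible R0 w}"

lemma Lright_nf_codes:
  assumes "g \<in> insert None (Some ` Xn)"
  shows "Lright R0 (\<lambda>n. [dec n]) nf_codes g = (\<lambda>(u, v). (map enc u, map enc v)) ` nf_mult (map_option dec g)"
proof -
  have gen: "(case g of None \<Rightarrow> [] | Some h \<Rightarrow> [dec h]) = gen_word (map_option dec g)"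
    by (cases g) (simp_all add: gen_word_def)
  have dec_enc: "dec \<circ> enc = id" by (simp add: fun_eq_iff)
  show ?thesis
  proof (intro set_eqI iffI)
    fix p assume "p \<in> Lright R0 (\<lambda>n. [dec n]) nf_codes g"
    then obtain u v where "p = (map enc u, map enc v)" "(u, v) \<in> nf_mult (map_option dec g)"
      unfolding Lright_def nf_codes_def nf_mult_def gen ev_singleton by (auto simp: dec_enc)
    then show "p \<in> (\<lambda>(u, v). (map enc u, map enc v)) ` nf_mult (map_option dec g)" by force
  next
    fix p assume "p \<in> (\<lambda>(u, v). (map enc u, map enc v)) ` nf_mult (map_option dec g)"
    then show "p \<in> Lright R0 (\<lambda>n. [dec n]) nf_codes g"
      unfolding Lright_def nf_codes_def nf_mult_def gen ev_singleton by (auto simp: dec_enc)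
  qed
qed

theorem automatic_R0: "automatic (UNIV :: letter set) R0"
  unfolding automatic_def
proof (intro exI[of _ Xn] exI[of _ "\<lambda>n. [dec n]"] exI[of _ nf_codes] conjI ballI)
  show "lang_ok UNIV R0 Xn (\<lambda>n. [dec n]) nf_codes"
    unfolding lang_ok_def
  proof (intro conjI ballI)
    fix w :: "letter list"
    obtain n where "(w, n) \<in> (rstep R0)\<^sup>*" "irreducible R0 n"
      using noetherian_normal_form[OF noetherian_R0] by blast
    then show "\<exists>u\<in>nf_codes. (ev (\<lambda>n. [dec n]) u, w) \<in> congr R0"
      unfolding nf_codes_def ev_singleton
      by (intro bexI[of _ "map enc n"]) (auto simp: comp_def intro: congr_sym rtrancl_rstep_congr)
  next
    show "regular nf_codes" unfolding nf_codes_def by (rule regular_map[OF regular_irreducible_R0 inj_enc])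
  next
    show "nf_codes \<subseteq> lists Xn" by (auto simp: nf_codes_def)
  qed (simp_all add: Xn_def)
next
  fix g assume "g \<in> insert None (Some ` Xn)"
  have "(\<lambda>(u, v). deltaR u v) ` Lright R0 (\<lambda>n. [dec n]) nf_codes g =
      map enc_pair ` ((\<lambda>(u, v). deltaR u v) ` nf_mult (map_option dec g))"
    unfolding Lright_nf_codes[OF \<open>g \<in> _\<close>] image_image
    by (rule image_cong[OF HOL.refl]) (auto simp: deltaR_map enc_pair_def)
  with regular_map[OF regular_padded_nf_mult inj_enc_pair]
  show "regular ((\<lambda>(u, v). deltaR u v) ` Lright R0 (\<lambda>n. [dec n]) nf_codes g)"
    by (simp only:)
qed

theorem mainTheorem4:
  shows "complete_srs R0 \<and> FCRS (UNIV :: letter set) R0 \<and> FDT (UNIV :: letter set) R0 \<and>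
         automatic (UNIV :: letter set) R0 \<and> \<not> biautomatic (UNIV :: letter set) R0"
  using complete_R0 FCRS_R0 FDT_R0 automatic_R0 not_biautomatic by blast

end
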